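(* Let $\mathcal{H}$ be a separable infinite-dimensional complex Hilbert space, $T$ a bounded linear operator on $\mathcal{H}$, and $k\ge 1$ an integer. Then $T$ is a completely non-unitary contraction with $\mathcal{D}_T\subseteq\mathcal{D}_{T^*}$, $\dim\mathcal{D}_T=1$ and $\dim\mathcal{D}_{T^*}=k+1$ if and only if there exists an orthonormal basis $\{e_n\}_{n\geq 0}$ of $\mathcal{H}$ with respect to which $T=S_k+F$, where $S_ke_n=e_{n+k}$ ($n\ge0$) is the unilateral shift of multiplicity $k$ and $F$ is an operator of rank at most one given by $$F(e_0)=\alpha_0e_0+\alpha_1e_1+\cdots+\alpha_{k-1}e_{k-1}+(\alpha_k-1)e_k,\qquad F(e_n)=0\ \ (n\geq 1),$$ for some $\alpha_0,\dots,\alpha_k\in\mathbb{C}$ with $\sum_{i=0}^{k}|\alpha_i|^2<1$.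
   Context: For a contraction $T$ on $\mathcal{H}$, $\mathcal{D}_T=\overline{(I-T^*T)^{1/2}\mathcal{H}}$ and $\mathcal{D}_{T^*}=\overline{(I-TT^* )^{1/2}\mathcal{H}}$. A contraction is completely non-unitary if it has no nonzero reducing subspace on which it is unitary. *)

theory Defs
  imports "HOL-Analysis.Analysis"
begin

text \<open>HOL-Analysis has no complex inner-product spaces, so we introduce the class of
complex Hilbert spaces: a real Banach space with a compatible complex scalar
multiplication and a complex inner product (linear in the first argument,
conjugate-linear in the second) inducing the norm.\<close>

class chilbert = banach +
  fixes scaleC :: "complex \<Rightarrow> 'a \<Rightarrow> 'a"
    and cinner :: "'a \<Rightarrow> 'a \<Rightarrow> complex"
  assumes scaleC_of_real: "scaleC (complex_of_real r) x = scaleR r x"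
    and scaleC_add_right: "scaleC c (x + y) = scaleC c x + scaleC c y"
    and scaleC_add_left: "scaleC (c + d) x = scaleC c x + scaleC d x"
    and scaleC_scaleC: "scaleC c (scaleC d x) = scaleC (c * d) x"
    and scaleC_one: "scaleC 1 x = x"
    and cinner_add_left: "cinner (x + y) z = cinner x z + cinner y z"
    and cinner_scaleC_left: "cinner (scaleC c x) y = c * cinner x y"
    and cinner_commute: "cinner y x = cnj (cinner x y)"
    and cinner_self_norm: "cinner x x = complex_of_real ((norm x)\<^sup>2)"

definition clinear_op :: "('a::chilbert \<Rightarrow> 'a) \<Rightarrow> bool" where
  "clinear_op T \<longleftrightarrow> (\<forall>x y. T (x + y) = T x + T y) \<and> (\<forall>c x. T (scaleC c x) = scaleC c (T x))"

definition bounded_op :: "('a::chilbert \<Rightarrow> 'a) \<Rightarrow> bool" where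
  "bounded_op T \<longleftrightarrow> clinear_op T \<and> (\<exists>K. \<forall>x. norm (T x) \<le> K * norm x)"

text \<open>Hilbert-space adjoint (exists uniquely for bounded operators by Riesz).\<close>
definition adj :: "('a::chilbert \<Rightarrow> 'a) \<Rightarrow> ('a \<Rightarrow> 'a)" where
  "adj T = (THE S. \<forall>x y. cinner (T x) y = cinner x (S y))"

definition contraction :: "('a::chilbert \<Rightarrow> 'a) \<Rightarrow> bool" where
  "contraction T \<longleftrightarrow> bounded_op T \<and> (\<forall>x. norm (T x) \<le> norm x)"

definition positive_op :: "('a::chilbert \<Rightarrow> 'a) \<Rightarrow> bool" where
  "positive_op A \<longleftrightarrow> bounded_op A \<and> (\<forall>x. cinner (A x) x \<in> \<real> \<and> 0 \<le> Re (cinner (A x) x))"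

definition op_sqrt :: "('a::chilbert \<Rightarrow> 'a) \<Rightarrow> ('a \<Rightarrow> 'a)" where
  "op_sqrt A = (THE R. positive_op R \<and> R \<circ> R = A)"

definition defect_space :: "('a::chilbert \<Rightarrow> 'a) \<Rightarrow> 'a set" where
  "defect_space T = closure (range (op_sqrt (\<lambda>x. x - adj T (T x))))"

definition defect_space_adj :: "('a::chilbert \<Rightarrow> 'a) \<Rightarrow> 'a set" where
  "defect_space_adj T = closure (range (op_sqrt (\<lambda>x. x - T (adj T x))))"

definition csubspace :: "'a::chilbert set \<Rightarrow> bool" where
  "csubspace M \<longleftrightarrow> 0 \<in> M \<and> (\<forall>x\<in>M. \<forall>y\<in>M. x + y \<in> M) \<and> (\<forall>c. \<forall>x\<in>M. scaleC c x \<in> M)"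

definition cspan :: "'a::chilbert set \<Rightarrow> 'a set" where
  "cspan S = {x. \<exists>B c. finite B \<and> B \<subseteq> S \<and> x = (\<Sum>b\<in>B. scaleC (c b) b)}"

definition cindependent :: "'a::chilbert set \<Rightarrow> bool" where
  "cindependent S \<longleftrightarrow> (\<forall>B c. finite B \<and> B \<subseteq> S \<and> (\<Sum>b\<in>B. scaleC (c b) b) = 0 \<longrightarrow> (\<forall>b\<in>B. c b = 0))"

definition has_cdim :: "'a::chilbert set \<Rightarrow> nat \<Rightarrow> bool" where
  "has_cdim V n \<longleftrightarrow> (\<exists>B. finite B \<and> card B = n \<and> B \<subseteq> V \<and> cindependent B \<and> cspan B = V)"

definition separable_hilbert :: "'a::chilbert itself \<Rightarrow> bool" where
  "separable_hilbert _ \<longleftrightarrow> (\<exists>D::'a set. countable D \<and> closure D = UNIV)"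

definition infinite_dimensional :: "'a::chilbert itself \<Rightarrow> bool" where
  "infinite_dimensional _ \<longleftrightarrow> \<not> (\<exists>B::'a set. finite B \<and> cspan B = UNIV)"

definition reducing_subspace :: "('a::chilbert \<Rightarrow> 'a) \<Rightarrow> 'a set \<Rightarrow> bool" where
  "reducing_subspace T M \<longleftrightarrow> csubspace M \<and> closed M \<and> T ` M \<subseteq> M \<and> adj T ` M \<subseteq> M"

definition unitary_on :: "('a::chilbert \<Rightarrow> 'a) \<Rightarrow> 'a set \<Rightarrow> bool" where
  "unitary_on T M \<longleftrightarrow> (\<forall>x\<in>M. norm (T x) = norm x) \<and> T ` M = M"

definition completely_non_unitary :: "('a::chilbert \<Rightarrow> 'a) \<Rightarrow> bool" where
  "completely_non_unitary T \<longleftrightarrow>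
     contraction T \<and> \<not> (\<exists>M. reducing_subspace T M \<and> M \<noteq> {0} \<and> unitary_on T M)"

definition orthonormal_basis_nat :: "(nat \<Rightarrow> 'a::chilbert) \<Rightarrow> bool" where
  "orthonormal_basis_nat e \<longleftrightarrow>
     (\<forall>m n. cinner (e m) (e n) = (if m = n then 1 else 0)) \<and> closure (cspan (range e)) = UNIV"

end

(* Both defect spaces are orthogonal complements of fixed-point spaces,
   D_T = {x. T* T x = x}^perp and D_T* = {x. T T* x = x}^perp; this needs the existence and
   uniqueness of the positive square root of I - T* T, which is built from the binomial series
   of sqrt (1 - t).

   For T = S_k + F put a = T e_0 = sum_{i<=k} alpha_i e_i.  Then I - T* T = (1 - sum |alpha_i|^2)
   <., e_0> e_0 and I - T T* = P - <., a> a, where P projects onto span {e_0, ..., e_k}; this gives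
   contractivity and both defect spaces.  A reducing subspace on which T is unitary is orthogonal
   to e_0, ..., e_k and, being invariant under T*, which maps e_(n+k) to e_n, to every e_n.

   Conversely, let D_T = span {d} with |d| = 1, so that d^perp is the set of vectors on which
   T is isometric, and let f_0, ..., f_(k-1) be an orthonormal basis of the orthogonal complement
   of d in D_T*.  Then e_0 = d, e_(r+1) = f_r and e_(n+k) = T e_n (n >= 1) is orthonormal, because
   T is isometric on d^perp and maps it into D_T*^perp.  Its orthogonal complement is a reducing
   subspace on which T is unitary, hence zero.  Finally T e_0 lies in D_T* = span {e_0, ..., e_k},
   and |T e_0| < 1 because T is not isometric at d. *)

theory Submission
  imports Defs "HOL-Computational_Algebra.Formal_Power_Series"
begin

lemma scaleC_zero_right [simp]: "scaleC c (0::'a::chilbert) = 0"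
proof -
  have "scaleC c (0::'a) = scaleC c 0 + scaleC c 0" by (metis add.right_neutral scaleC_add_right)
  then show ?thesis by simp
qed

lemma scaleC_zero_left [simp]: "scaleC 0 (x::'a::chilbert) = 0"
proof -
  have "scaleC 0 x = scaleC 0 x + scaleC 0 x" by (metis add.right_neutral scaleC_add_left)
  then show ?thesis by simp
qed

lemma scaleC_minus_right: "scaleC c (- x::'a::chilbert) = - scaleC c x"
  by (metis add_eq_0_iff2 scaleC_add_right scaleC_zero_right)

lemma scaleC_diff_right: "scaleC c (x - y::'a::chilbert) = scaleC c x - scaleC c y"
  by (metis diff_conv_add_uminus scaleC_add_right scaleC_minus_right)

lemma scaleC_minus_left: "scaleC (- c) (x::'a::chilbert) = - scaleC c x"
  by (metis add_eq_0_iff2 scaleC_add_left scaleC_zero_left)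

lemma scaleC_diff_left: "scaleC (c - d) (x::'a::chilbert) = scaleC c x - scaleC d x"
  by (metis diff_conv_add_uminus scaleC_add_left scaleC_minus_left)

lemma scaleC_scaleR: "scaleC c (scaleR r x) = scaleR r (scaleC c (x::'a::chilbert))"
  by (metis mult.commute scaleC_of_real scaleC_scaleC)

lemma scaleC_sum_right: "scaleC c (sum f A) = (\<Sum>a\<in>A. scaleC c (f a :: 'a::chilbert))"
  by (induction A rule: infinite_finite_induct) (auto simp: scaleC_add_right)

lemma scaleC_sum_left: "scaleC (sum f A) (x::'a::chilbert) = (\<Sum>a\<in>A. scaleC (f a) x)"
  by (induction A rule: infinite_finite_induct) (auto simp: scaleC_add_left)

global_interpretation cvs: vector_space "scaleC :: complex \<Rightarrow> 'a \<Rightarrow> 'a::chilbert"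
  by unfold_locales (auto simp: scaleC_add_right scaleC_add_left scaleC_scaleC scaleC_one)

lemma cspan_eq_span: "cspan S = cvs.span S"
  unfolding cspan_def cvs.span_explicit by auto

lemma csubspace_iff_subspace: "csubspace M \<longleftrightarrow> cvs.subspace M"
  unfolding csubspace_def cvs.subspace_def by auto

lemma cindependent_iff_independent: "cindependent S \<longleftrightarrow> cvs.independent S"
  unfolding cindependent_def cvs.dependent_explicit by blast

lemma cinner_add_right: "cinner x (y + z) = cinner x y + cinner x (z::'a::chilbert)"
  by (metis cinner_add_left cinner_commute complex_cnj_add)

lemma cinner_scaleC_right: "cinner x (scaleC c y) = cnj c * cinner x (y::'a::chilbert)"
  by (metis cinner_commute cinner_scaleC_left complex_cnj_mult)

lemma cinner_zero_left [simp]: "cinner 0 (x::'a::chilbert) = 0"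
  by (metis add_cancel_right_right cinner_add_left add_0)

lemma cinner_zero_right [simp]: "cinner x (0::'a::chilbert) = 0"
  by (metis cinner_commute cinner_zero_left complex_cnj_zero)

lemma cinner_eq_zero_sym: "cinner x y = 0 \<longleftrightarrow> cinner y (x::'a::chilbert) = 0"
  by (metis cinner_commute complex_cnj_zero_iff)

lemma cinner_minus_left: "cinner (- x) (y::'a::chilbert) = - cinner x y"
  by (metis add_eq_0_iff2 cinner_add_left cinner_zero_left)

lemma cinner_minus_right: "cinner x (- y::'a::chilbert) = - cinner x y"
  by (metis add_eq_0_iff2 cinner_add_right cinner_zero_right)

lemma cinner_diff_left: "cinner (x - y) (z::'a::chilbert) = cinner x z - cinner y z"
  using cinner_add_left[of x "-y" z] by (simp add: cinner_minus_left)

lemma cinner_diff_right: "cinner x (y - z::'a::chilbert) = cinner x y - cinner x z"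
  using cinner_add_right[of x y "-z"] by (simp add: cinner_minus_right)

lemma cinner_sum_left: "cinner (sum f A) (y::'a::chilbert) = (\<Sum>a\<in>A. cinner (f a) y)"
  by (induction A rule: infinite_finite_induct) (auto simp: cinner_add_left)

lemma cinner_sum_right: "cinner y (sum f A) = (\<Sum>a\<in>A. cinner y (f a :: 'a::chilbert))"
  by (induction A rule: infinite_finite_induct) (auto simp: cinner_add_right)

lemma cinner_scaleR_left: "cinner (scaleR r x) (y::'a::chilbert) = of_real r * cinner x y"
  by (metis cinner_scaleC_left scaleC_of_real)

lemma cinner_scaleR_right: "cinner x (scaleR r y) = of_real r * cinner x (y::'a::chilbert)"
  by (metis cinner_scaleC_right scaleC_of_real complex_cnj_complex_of_real)

lemmas cinner_simps = cinner_add_left cinner_add_right cinner_scaleC_left cinner_scaleC_right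
  cinner_diff_left cinner_diff_right cinner_minus_left cinner_minus_right
  cinner_sum_left cinner_sum_right cinner_scaleR_left cinner_scaleR_right

lemma cinner_self_eq_zero [simp]: "cinner x x = 0 \<longleftrightarrow> (x::'a::chilbert) = 0"
  by (simp add: cinner_self_norm)

lemma cnj_cinner_self [simp]: "cnj (cinner x (x::'a::chilbert)) = cinner x x"
  by (simp add: cinner_self_norm)

lemma norm_sq_cinner: "(norm (x::'a::chilbert))\<^sup>2 = Re (cinner x x)"
  by (simp add: cinner_self_norm)

lemma norm_scaleC: "norm (scaleC c x) = cmod c * norm (x::'a::chilbert)"
proof -
  have "complex_of_real ((norm (scaleC c x))\<^sup>2) = cinner (scaleC c x) (scaleC c x)"
    by (simp add: cinner_self_norm)
  also have "\<dots> = (c * cnj c) * cinner x x" by (simp add: cinner_simps mult.assoc)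
  also have "\<dots> = complex_of_real ((cmod c)\<^sup>2 * (norm x)\<^sup>2)"
    by (simp only: complex_norm_square[symmetric] cinner_self_norm[of x] of_real_mult)
  finally have "(norm (scaleC c x))\<^sup>2 = (cmod c * norm x)\<^sup>2"
    by (simp only: of_real_eq_iff power_mult_distrib)
  then show ?thesis by simp
qed

lemma norm_diff_scaleC_square:
  assumes "y \<noteq> 0"
  shows "(norm (z - scaleC (cinner z y / cinner y y) y))\<^sup>2
    = (norm z)\<^sup>2 - (cmod (cinner z y))\<^sup>2 / (norm (y::'a::chilbert))\<^sup>2"
proof -
  define t where "t = cinner z y / cinner y y"
  have yy: "cinner y y = of_real ((norm y)\<^sup>2)" by (rule cinner_self_norm)
  have "complex_of_real ((norm (z - scaleC t y))\<^sup>2) = cinner (z - scaleC t y) (z - scaleC t y)"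
    by (simp add: cinner_self_norm)
  also have "\<dots> = cinner z z - cnj t * cinner z y - t * cinner y z + t * cnj t * cinner y y"
    by (simp add: cinner_simps algebra_simps)
  also have "\<dots> = cinner z z - cinner z y * cnj (cinner z y) / cinner y y"
    using assms by (simp add: t_def cinner_commute[of y z] yy field_simps)
  also have "\<dots> = complex_of_real ((norm z)\<^sup>2 - (cmod (cinner z y))\<^sup>2 / (norm y)\<^sup>2)"
    by (simp only: complex_norm_square[symmetric] yy cinner_self_norm[of z] of_real_diff of_real_divide)
  finally show ?thesis unfolding t_def using of_real_eq_iff by blast
qed

lemma cinner_cauchy_schwarz: "cmod (cinner x y) \<le> norm x * norm (y::'a::chilbert)"
proof (cases "y = 0")
  case False
  have "0 \<le> (norm (x - scaleC (cinner x y / cinner y y) y))\<^sup>2" by simp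
  then have "(cmod (cinner x y))\<^sup>2 / (norm y)\<^sup>2 \<le> (norm x)\<^sup>2"
    unfolding norm_diff_scaleC_square[OF False] by simp
  then have "(cmod (cinner x y))\<^sup>2 \<le> (norm x * norm y)\<^sup>2"
    using False by (simp add: field_simps)
  then show ?thesis by (rule power2_le_imp_le) simp
qed simp

lemma bounded_bilinear_cinner: "bounded_bilinear (cinner :: 'a::chilbert \<Rightarrow> 'a \<Rightarrow> complex)"
proof
  fix a a' b b' :: 'a and r :: real
  show "cinner (a + a') b = cinner a b + cinner a' b" by (rule cinner_add_left)
  show "cinner a (b + b') = cinner a b + cinner a b'" by (rule cinner_add_right)
  show "cinner (r *\<^sub>R a) b = r *\<^sub>R cinner a b" by (simp add: cinner_scaleR_left scaleR_conv_of_real)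
  show "cinner a (r *\<^sub>R b) = r *\<^sub>R cinner a b" by (simp add: cinner_scaleR_right scaleR_conv_of_real)
next
  show "\<exists>K. \<forall>a b::'a. norm (cinner a b) \<le> norm a * norm b * K"
    by (rule exI[of _ 1]) (simp add: cinner_cauchy_schwarz)
qed

lemmas tendsto_cinner [tendsto_intros] = bounded_bilinear.tendsto[OF bounded_bilinear_cinner]
lemmas continuous_on_cinner [continuous_intros] = bounded_bilinear.continuous_on[OF bounded_bilinear_cinner]

lemma bounded_linear_scaleC: "bounded_linear (scaleC c :: 'a::chilbert \<Rightarrow> 'a)"
proof
  fix x y :: 'a and r :: real
  show "scaleC c (x + y) = scaleC c x + scaleC c y" by (rule scaleC_add_right)
  show "scaleC c (r *\<^sub>R x) = r *\<^sub>R scaleC c x" by (rule scaleC_scaleR)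
  show "\<exists>K. \<forall>x::'a. norm (scaleC c x) \<le> norm x * K"
    by (rule exI[of _ "cmod c"]) (simp add: norm_scaleC)
qed

lemmas tendsto_scaleC [tendsto_intros] = bounded_linear.tendsto[OF bounded_linear_scaleC]

lemma cinner_all_zero_imp_zero: "(\<And>y. cinner x y = 0) \<Longrightarrow> (x::'a::chilbert) = 0"
  using cinner_self_eq_zero by blast

lemma cinner_ext_right: "(\<And>y. cinner y x = cinner y x') \<Longrightarrow> (x::'a::chilbert) = x'"
  by (rule eq_iff_diff_eq_0[THEN iffD2], rule cinner_all_zero_imp_zero)
     (metis cinner_commute cinner_diff_left right_minus_eq)

lemma norm_add_square: "(norm (x + y::'a::chilbert))\<^sup>2 = (norm x)\<^sup>2 + (norm y)\<^sup>2 + 2 * Re (cinner x y)"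
proof -
  have "cinner (x + y) (x + y) = cinner x x + cinner y y + (cinner x y + cnj (cinner x y))"
    by (simp add: cinner_simps cinner_commute[of y x])
  then show ?thesis by (simp add: norm_sq_cinner)
qed

lemma parallelogram:
  "(norm (u + v::'a::chilbert))\<^sup>2 + (norm (u - v))\<^sup>2 = 2 * (norm u)\<^sup>2 + 2 * (norm v)\<^sup>2"
  using norm_add_square[of u v] norm_add_square[of u "-v"] by (simp add: cinner_minus_right)

lemma bounded_opI:
  assumes "\<And>x y. T (x + y) = T x + T y" "\<And>c x. T (scaleC c x) = scaleC c (T x)"
    "\<And>x. norm (T x) \<le> K * norm x"
  shows "bounded_op T"
  using assms unfolding bounded_op_def clinear_op_def by blast

lemma bounded_op_add: "bounded_op T \<Longrightarrow> T (x + y) = T x + T y"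
  and bounded_op_scaleC: "bounded_op T \<Longrightarrow> T (scaleC c x) = scaleC c (T x)"
  unfolding bounded_op_def clinear_op_def by auto

lemma bounded_op_linear: "bounded_op T \<Longrightarrow> bounded_linear T"
  unfolding bounded_op_def clinear_op_def
proof (elim conjE exE, intro bounded_linear_intro)
  fix K assume add: "\<forall>x y. T (x + y) = T x + T y" and scale: "\<forall>c x. T (scaleC c x) = scaleC c (T x)"
    and K: "\<forall>x. norm (T x) \<le> K * norm x"
  fix x y :: 'a and r :: real
  show "T (x + y) = T x + T y" using add by auto
  show "T (r *\<^sub>R x) = r *\<^sub>R T x" using scale by (metis scaleC_of_real)
  show "norm (T x) \<le> norm x * K" using K by (simp add: mult.commute)
qed

lemma bounded_op_zero: "bounded_op T \<Longrightarrow> T 0 = 0"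
  using bounded_op_linear linear_simps(3) by blast

lemma bounded_op_diff: "bounded_op T \<Longrightarrow> T (x - y) = T x - T y"
  by (metis bounded_op_add eq_diff_eq)

lemma bounded_op_scaleR: "bounded_op T \<Longrightarrow> T (r *\<^sub>R x) = r *\<^sub>R T x"
  by (metis bounded_op_scaleC scaleC_of_real)

lemma bounded_op_sum: "bounded_op T \<Longrightarrow> T (sum f A) = (\<Sum>a\<in>A. T (f a))"
  by (induction A rule: infinite_finite_induct) (auto simp: bounded_op_zero bounded_op_add)

lemma bounded_op_continuous_on: "bounded_op T \<Longrightarrow> continuous_on S T"
  by (rule linear_continuous_on[OF bounded_op_linear])

lemma bounded_op_bound:
  assumes "bounded_op T" obtains K where "K > 0" "\<And>x. norm (T x) \<le> K * norm x"
  using bounded_linear.pos_bounded[OF bounded_op_linear[OF assms]] by (metis mult.commute)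

lemma bounded_op_id: "bounded_op (\<lambda>x. x)"
  by (rule bounded_opI[of _ 1]) auto

lemma bounded_op_comp: "bounded_op S \<Longrightarrow> bounded_op T \<Longrightarrow> bounded_op (\<lambda>x. S (T x))"
proof -
  assume S: "bounded_op S" and T: "bounded_op T"
  obtain K1 where K1: "K1 > 0" "\<And>x. norm (S x) \<le> K1 * norm x" using bounded_op_bound[OF S] by blast
  obtain K2 where K2: "\<And>x. norm (T x) \<le> K2 * norm x" using T unfolding bounded_op_def by blast
  show ?thesis
  proof (rule bounded_opI[of _ "K1 * K2"])
    fix x
    have "norm (S (T x)) \<le> K1 * norm (T x)" by (rule K1)
    also have "\<dots> \<le> K1 * (K2 * norm x)" using K1(1) K2 by (simp add: mult_left_mono)
    finally show "norm (S (T x)) \<le> K1 * K2 * norm x" by (simp add: mult.assoc)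
  qed (use S T in \<open>simp_all add: bounded_op_add bounded_op_scaleC\<close>)
qed

lemma bounded_op_diff_fun: "bounded_op S \<Longrightarrow> bounded_op T \<Longrightarrow> bounded_op (\<lambda>x. S x - T x)"
proof -
  assume S: "bounded_op S" and T: "bounded_op T"
  obtain K1 where K1: "\<And>x. norm (S x) \<le> K1 * norm x" using S unfolding bounded_op_def by blast
  obtain K2 where K2: "\<And>x. norm (T x) \<le> K2 * norm x" using T unfolding bounded_op_def by blast
  show ?thesis
  proof (rule bounded_opI[of _ "K1 + K2"])
    fix x
    have "norm (S x - T x) \<le> norm (S x) + norm (T x)" by (rule norm_triangle_ineq4)
    also have "\<dots> \<le> K1 * norm x + K2 * norm x" using K1 K2 by (rule add_mono)
    finally show "norm (S x - T x) \<le> (K1 + K2) * norm x" by (simp add: algebra_simps)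
  qed (use S T in \<open>simp_all add: bounded_op_add bounded_op_scaleC scaleC_diff_right\<close>)
qed

lemma bounded_op_funpow: "bounded_op T \<Longrightarrow> bounded_op (T ^^ n)"
  by (induction n) (simp_all add: bounded_op_id[unfolded id_def[symmetric]] bounded_op_comp[of T, unfolded comp_def[symmetric]])

lemma csubspace_kernel: "bounded_op A \<Longrightarrow> csubspace {x. A x = 0}"
  unfolding csubspace_def by (auto simp: bounded_op_zero bounded_op_add bounded_op_scaleC)

lemma closed_kernel: "bounded_op A \<Longrightarrow> closed {x. A x = 0}"
  by (intro closed_Collect_eq continuous_on_const bounded_op_continuous_on)

section \<open>Orthogonal complements and the projection theorem\<close>

definition orthogonal_complement :: "'a::chilbert set \<Rightarrow> 'a set" where
  "orthogonal_complement M = {x. \<forall>y\<in>M. cinner x y = 0}"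

lemma orthogonal_complementI: "(\<And>y. y \<in> M \<Longrightarrow> cinner x y = 0) \<Longrightarrow> x \<in> orthogonal_complement M"
  by (simp add: orthogonal_complement_def)

lemma orthogonal_complementD: "x \<in> orthogonal_complement M \<Longrightarrow> y \<in> M \<Longrightarrow> cinner x y = 0"
  by (simp add: orthogonal_complement_def)

lemma orthogonal_complementD': "x \<in> orthogonal_complement M \<Longrightarrow> y \<in> M \<Longrightarrow> cinner y x = 0"
  by (metis orthogonal_complementD cinner_eq_zero_sym)

lemma orthogonal_complement_antimono: "A \<subseteq> B \<Longrightarrow> orthogonal_complement B \<subseteq> orthogonal_complement A"
  unfolding orthogonal_complement_def by auto

lemma orthogonal_complement_UNIV: "orthogonal_complement UNIV = {0::'a::chilbert}"
  by (auto simp: orthogonal_complement_def) (metis cinner_self_eq_zero)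

lemma csubspace_orthogonal_complement: "csubspace (orthogonal_complement M)"
  unfolding csubspace_def orthogonal_complement_def by (auto simp: cinner_simps)

lemma closed_orthogonal_complement: "closed (orthogonal_complement M)"
proof -
  have "orthogonal_complement M = (\<Inter>y\<in>M. {x. cinner x y = 0})"
    unfolding orthogonal_complement_def by auto
  moreover have "closed {x. cinner x y = 0}" for y :: 'a
    by (rule closed_Collect_eq) (intro continuous_intros)+
  ultimately show ?thesis by auto
qed

lemma orthogonal_complement_closure:
  "orthogonal_complement (closure M) = orthogonal_complement (M::'a::chilbert set)"
proof
  show "orthogonal_complement M \<subseteq> orthogonal_complement (closure M)"
  proof
    fix x assume x: "x \<in> orthogonal_complement M"
    have "closed {y. cinner x y = 0}"
      by (rule closed_Collect_eq) (intro continuous_intros)+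
    then have "closure M \<subseteq> {y. cinner x y = 0}"
      by (rule closure_minimal[rotated]) (use x in \<open>auto dest: orthogonal_complementD\<close>)
    then show "x \<in> orthogonal_complement (closure M)" by (auto intro: orthogonal_complementI)
  qed
qed (rule orthogonal_complement_antimono[OF closure_subset])

lemma orthogonal_complement_span:
  "orthogonal_complement (cvs.span S) = orthogonal_complement (S::'a::chilbert set)"
proof
  show "orthogonal_complement S \<subseteq> orthogonal_complement (cvs.span S)"
  proof
    fix x assume x: "x \<in> orthogonal_complement S"
    have "cvs.subspace {y. cinner x y = 0}"
      unfolding cvs.subspace_def by (auto simp: cinner_simps)
    then have "cvs.span S \<subseteq> {y. cinner x y = 0}"
      by (rule cvs.span_minimal[rotated]) (use x in \<open>auto dest: orthogonal_complementD\<close>)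
    then show "x \<in> orthogonal_complement (cvs.span S)" by (auto intro: orthogonal_complementI)
  qed
qed (rule orthogonal_complement_antimono[OF cvs.span_superset])

lemma csubspace_closure:
  assumes "csubspace M" shows "csubspace (closure M)"
proof -
  have "cvs.subspace M" using assms by (simp add: csubspace_iff_subspace)
  then have lin: "x + y \<in> M" "scaleC c x \<in> M" if "x \<in> M" "y \<in> M" for x y c
    using that by (auto simp: cvs.subspace_def)
  have "x + y \<in> closure M" if xy: "x \<in> closure M" "y \<in> closure M" for x y
  proof -
    obtain f where "\<forall>n. f n \<in> M" "f \<longlonglongrightarrow> x"
      using xy(1) unfolding closure_sequential by blast
    moreover obtain g where "\<forall>n. g n \<in> M" "g \<longlonglongrightarrow> y"
      using xy(2) unfolding closure_sequential by blast
    ultimately show ?thesis unfolding closure_sequential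
      by (intro exI[of _ "\<lambda>n. f n + g n"]) (auto intro: lin tendsto_add)
  qed
  moreover have "scaleC c x \<in> closure M" if x: "x \<in> closure M" for x c
  proof -
    obtain f where "\<forall>n. f n \<in> M" "f \<longlonglongrightarrow> x"
      using x unfolding closure_sequential by blast
    then show ?thesis unfolding closure_sequential
      by (intro exI[of _ "\<lambda>n. scaleC c (f n)"]) (auto intro: lin tendsto_scaleC)
  qed
  moreover have "0 \<in> closure M" using assms closure_subset unfolding csubspace_def by blast
  ultimately show ?thesis unfolding csubspace_def by blast
qed

lemma norm_diff_near_minimizers:
  assumes M: "csubspace M" and a: "a \<in> M" and b: "b \<in> M"
    and low: "\<And>q. q \<in> M \<Longrightarrow> \<delta> \<le> norm (x - q)" and "0 \<le> \<delta>"
  shows "(norm (a - b))\<^sup>2 \<le> 2 * ((norm (x - a))\<^sup>2 - \<delta>\<^sup>2) + 2 * ((norm (x - b))\<^sup>2 - \<delta>\<^sup>2)"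
proof -
  have "scaleC (1/2) (a + b) \<in> M" using M a b unfolding csubspace_def by blast
  then have "2 * \<delta> \<le> 2 * norm (x - scaleC (1/2) (a + b))" using low by simp
  also have "2 * norm (x - scaleC (1/2) (a + b)) = norm ((x - a) + (x - b))"
  proof -
    have "(x - a) + (x - b) = scaleC 2 (x - scaleC (1/2) (a + b))"
      by (simp add: scaleC_diff_right scaleC_scaleC scaleC_add_left[of 1 1, simplified])
    then show ?thesis by (simp add: norm_scaleC)
  qed
  finally have "(2 * \<delta>)\<^sup>2 \<le> (norm ((x - a) + (x - b)))\<^sup>2"
    using \<open>0 \<le> \<delta>\<close> by (intro power_mono) auto
  then have "4 * \<delta>\<^sup>2 \<le> (norm ((x - a) + (x - b)))\<^sup>2" by (simp add: power_mult_distrib)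
  moreover have "(norm ((x - a) + (x - b)))\<^sup>2 + (norm (a - b))\<^sup>2
      = 2 * (norm (x - a))\<^sup>2 + 2 * (norm (x - b))\<^sup>2"
    using parallelogram[of "x - a" "x - b"] by (simp add: norm_minus_commute)
  ultimately show ?thesis by (simp add: algebra_simps)
qed

lemma Cauchy_minimizing_sequence:
  assumes M: "csubspace M" and m: "\<And>n. m n \<in> M"
    and low: "\<And>q. q \<in> M \<Longrightarrow> \<delta> \<le> norm (x - q)" and "0 \<le> \<delta>"
    and close: "\<And>n. norm (x - m n) < \<delta> + 1 / real (Suc n)"
  shows "Cauchy m"
proof (rule CauchyI)
  have excess: "(norm (x - m n))\<^sup>2 - \<delta>\<^sup>2 \<le> (2 * \<delta> + 1) / real (Suc n)" for n
  proof -
    define r where "r = 1 / real (Suc n)"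
    have r: "0 < r" "r \<le> 1" unfolding r_def by (auto simp: field_simps)
    have "(norm (x - m n))\<^sup>2 \<le> (\<delta> + r)\<^sup>2"
      using close[of n] low[OF m] \<open>0 \<le> \<delta>\<close> unfolding r_def by (intro power_mono) auto
    also have "\<dots> \<le> \<delta>\<^sup>2 + (2 * \<delta> + 1) * r"
      using r \<open>0 \<le> \<delta>\<close> by (simp add: power2_eq_square algebra_simps mult_left_le)
    finally show ?thesis unfolding r_def by simp
  qed
  fix e :: real assume e: "0 < e"
  obtain N where N: "4 * (2 * \<delta> + 1) / e\<^sup>2 < real N"
    using reals_Archimedean2 by blast
  have "norm (m a - m b) < e" if "N \<le> a" "N \<le> b" for a b
  proof -
    have "(norm (m a - m b))\<^sup>2 \<le> 2 * ((norm (x - m a))\<^sup>2 - \<delta>\<^sup>2) + 2 * ((norm (x - m b))\<^sup>2 - \<delta>\<^sup>2)"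
      by (rule norm_diff_near_minimizers[OF M m m]) (use low \<open>0 \<le> \<delta>\<close> in auto)
    also have "\<dots> \<le> 2 * ((2 * \<delta> + 1) / real (Suc a)) + 2 * ((2 * \<delta> + 1) / real (Suc b))"
      using excess[of a] excess[of b] by (intro add_mono mult_left_mono) auto
    also have "\<dots> \<le> 2 * ((2 * \<delta> + 1) / real (Suc N)) + 2 * ((2 * \<delta> + 1) / real (Suc N))"
      using that \<open>0 \<le> \<delta>\<close> by (intro add_mono mult_left_mono divide_left_mono) auto
    also have "\<dots> = 4 * ((2 * \<delta> + 1) / real (Suc N))" by simp
    also have "\<dots> < e\<^sup>2"
    proof -
      have "4 * (2 * \<delta> + 1) < real N * e\<^sup>2" using N e by (simp add: pos_divide_less_eq)
      also have "\<dots> \<le> real (Suc N) * e\<^sup>2" by (simp add: mult_right_mono)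
      finally show ?thesis by (simp add: pos_divide_less_eq mult.commute)
    qed
    finally show ?thesis using e by (simp add: power_less_imp_less_base less_imp_le)
  qed
  then show "\<exists>M. \<forall>a\<ge>M. \<forall>b\<ge>M. norm (m a - m b) < e" by blast
qed

lemma closest_point_exists:
  assumes M: "csubspace M" and cl: "closed M"
  shows "\<exists>p\<in>M. \<forall>q\<in>M. norm (x - p) \<le> norm (x - q)"
proof -
  define \<delta> where "\<delta> = (INF q\<in>M. norm (x - q))"
  have M0: "0 \<in> M" using M unfolding csubspace_def by blast
  have bdd: "bdd_below ((\<lambda>q. norm (x - q)) ` M)" by (rule bdd_belowI[of _ 0]) auto
  have low: "\<delta> \<le> norm (x - q)" if "q \<in> M" for q
    unfolding \<delta>_def using bdd that by (rule cINF_lower)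
  have "0 \<le> \<delta>" unfolding \<delta>_def using M0 by (intro cINF_greatest) auto
  have "\<exists>m\<in>M. norm (x - m) < \<delta> + 1 / real (Suc n)" for n
    using cInf_lessD[of "(\<lambda>q. norm (x - q)) ` M" "\<delta> + 1 / real (Suc n)"] M0 unfolding \<delta>_def by auto
  then obtain m where m: "\<And>n. m n \<in> M" "\<And>n. norm (x - m n) < \<delta> + 1 / real (Suc n)"
    by metis
  have "Cauchy m" by (rule Cauchy_minimizing_sequence[OF M m(1) low \<open>0 \<le> \<delta>\<close> m(2)])
  then obtain p where p: "m \<longlonglongrightarrow> p" using Cauchy_convergent_iff convergent_def by blast
  have "norm (x - p) \<le> \<delta>"
  proof (rule LIMSEQ_le)
    show "(\<lambda>n. norm (x - m n)) \<longlonglongrightarrow> norm (x - p)" by (intro tendsto_intros p)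
    show "(\<lambda>n. \<delta> + 1 / real (Suc n)) \<longlonglongrightarrow> \<delta>"
      using tendsto_add[OF tendsto_const LIMSEQ_inverse_real_of_nat] by (simp add: inverse_eq_divide)
    show "\<exists>N. \<forall>n\<ge>N. norm (x - m n) \<le> \<delta> + 1 / real (Suc n)" using m(2) less_imp_le by blast
  qed
  then show ?thesis using closed_sequentially[OF cl m(1) p] low by (meson order.trans)
qed

lemma projection_exists:
  assumes M: "csubspace M" and cl: "closed M"
  shows "\<exists>p\<in>M. x - p \<in> orthogonal_complement M"
proof -
  obtain p where pM: "p \<in> M" and pmin: "\<And>q. q \<in> M \<Longrightarrow> norm (x - p) \<le> norm (x - q)"
    using closest_point_exists[OF assms] by blast
  have "cinner (x - p) y = 0" if yM: "y \<in> M" for y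
  proof (rule ccontr)
    assume ne: "cinner (x - p) y \<noteq> 0"
    then have y0: "y \<noteq> 0" by auto
    define t where "t = cinner (x - p) y / cinner y y"
    have "p + scaleC t y \<in> M" using M pM yM unfolding csubspace_def by blast
    then have "norm (x - p) \<le> norm (x - (p + scaleC t y))" by (rule pmin)
    then have "norm (x - p) \<le> norm ((x - p) - scaleC t y)" by (simp add: algebra_simps)
    then have "(norm (x - p))\<^sup>2 \<le> (norm ((x - p) - scaleC t y))\<^sup>2" by (simp add: power_mono)
    also have "\<dots> = (norm (x - p))\<^sup>2 - (cmod (cinner (x - p) y))\<^sup>2 / (norm y)\<^sup>2"
      unfolding t_def by (rule norm_diff_scaleC_square[OF y0])
    finally have "(cmod (cinner (x - p) y))\<^sup>2 / (norm y)\<^sup>2 \<le> 0" by simp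
    moreover have "(cmod (cinner (x - p) y))\<^sup>2 / (norm y)\<^sup>2 > 0" using ne y0 by simp
    ultimately show False by simp
  qed
  then have "x - p \<in> orthogonal_complement M" by (rule orthogonal_complementI)
  then show ?thesis using pM by blast
qed

lemma orthogonal_complement_orthogonal_complement:
  assumes "csubspace M" "closed M"
  shows "orthogonal_complement (orthogonal_complement M) = M"
proof
  show "M \<subseteq> orthogonal_complement (orthogonal_complement M)"
  proof
    fix x assume "x \<in> M"
    show "x \<in> orthogonal_complement (orthogonal_complement M)"
      by (rule orthogonal_complementI, rule orthogonal_complementD'[OF _ \<open>x \<in> M\<close>])
  qed
  show "orthogonal_complement (orthogonal_complement M) \<subseteq> M"
  proof
    fix y assume y: "y \<in> orthogonal_complement (orthogonal_complement M)"
    obtain p where pM: "p \<in> M" and yp: "y - p \<in> orthogonal_complement M"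
      using projection_exists[OF assms] by blast
    have "cinner y (y - p) = 0" using y yp by (rule orthogonal_complementD)
    moreover have "cinner p (y - p) = 0" using yp pM by (rule orthogonal_complementD')
    ultimately have "cinner (y - p) (y - p) = 0" by (simp add: cinner_diff_left)
    then show "y \<in> M" using pM by simp
  qed
qed

section \<open>The adjoint\<close>

lemma riesz_representation:
  assumes T: "bounded_op T"
  shows "\<exists>z. \<forall>x. cinner (T x) y = cinner x z"
proof (cases "\<forall>x. cinner (T x) y = 0")
  case True then show ?thesis by (intro exI[of _ 0]) simp
next
  case False
  define f where "f x = cinner (T x) y" for x
  define K where "K = {x. f x = 0}"
  have fadd: "f (a + b) = f a + f b" for a b
    unfolding f_def using T by (simp add: bounded_op_add cinner_add_left)
  have fscale: "f (scaleC c a) = c * f a" for c a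
    unfolding f_def using T by (simp add: bounded_op_scaleC cinner_scaleC_left)
  have fdiff: "f (a - b) = f a - f b" for a b
    unfolding f_def using T by (simp add: bounded_op_diff cinner_diff_left)
  have subK: "csubspace K"
    unfolding csubspace_def K_def using fadd fscale fscale[of 0] by auto
  have clK: "closed K" unfolding K_def f_def
    by (rule closed_Collect_eq) (intro continuous_intros bounded_op_continuous_on[OF T])+
  obtain w where w: "f w \<noteq> 0" using False unfolding f_def by blast
  obtain p where pK: "p \<in> K" and up: "w - p \<in> orthogonal_complement K"
    using projection_exists[OF subK clK] by blast
  define u where "u = w - p"
  have fu: "f u \<noteq> 0" using w pK unfolding u_def K_def by (simp add: fdiff)
  then have "cinner u u \<noteq> 0" using fscale[of 0 u] by auto
  show ?thesis
  proof (intro exI allI)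
    fix x
    define c where "c = f x / f u"
    have "x - scaleC c u \<in> K" using fu unfolding K_def by (simp add: fdiff fscale c_def)
    then have "cinner (x - scaleC c u) u = 0" using up unfolding u_def by (rule orthogonal_complementD'[rotated])
    then have "cinner x u = c * cinner u u" by (simp add: cinner_simps)
    then have "cinner x (scaleC (cnj (f u) / cinner u u) u) = f x"
      using fu \<open>cinner u u \<noteq> 0\<close> by (simp add: cinner_scaleC_right c_def field_simps)
    then show "cinner (T x) y = cinner x (scaleC (cnj (f u) / cinner u u) u)" unfolding f_def by simp
  qed
qed

lemma cinner_adj_right:
  assumes "bounded_op T" shows "cinner (T x) y = cinner x (adj T y)"
proof -
  have "\<exists>!S. \<forall>x y. cinner (T x) y = cinner x (S y)"
  proof (rule ex_ex1I)
    show "\<exists>S. \<forall>x y. cinner (T x) y = cinner x (S y)" using riesz_representation[OF assms] by metis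
  next
    fix S1 S2 assume "\<forall>x y. cinner (T x) y = cinner x (S1 y)" "\<forall>x y. cinner (T x) y = cinner x (S2 y)"
    then show "S1 = S2" by (intro ext cinner_ext_right) metis
  qed
  then have "\<forall>x y. cinner (T x) y = cinner x (adj T y)" unfolding adj_def by (rule theI')
  then show ?thesis by blast
qed

lemma cinner_adj_left:
  assumes "bounded_op T" shows "cinner (adj T x) y = cinner x (T y)"
  by (metis cinner_adj_right assms cinner_commute)

lemma norm_adj_le:
  assumes T: "bounded_op T" and K: "\<And>x. norm (T x) \<le> K * norm x" and "0 \<le> K"
  shows "norm (adj T y) \<le> K * norm y"
proof -
  define z where "z = adj T y"
  have "(norm z)\<^sup>2 = Re (cinner (T z) y)" by (simp add: cinner_adj_right[OF T] z_def norm_sq_cinner)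
  also have "\<dots> \<le> norm (T z) * norm y" by (rule order_trans[OF complex_Re_le_cmod cinner_cauchy_schwarz])
  also have "\<dots> \<le> K * norm z * norm y" using K by (simp add: mult_right_mono)
  finally have "norm z * norm z \<le> (K * norm y) * norm z" by (simp add: power2_eq_square algebra_simps)
  then show ?thesis unfolding z_def[symmetric] using \<open>0 \<le> K\<close>
    by (cases "norm z = 0") (auto simp: mult_le_cancel_right)
qed

lemma bounded_op_adj:
  assumes T: "bounded_op T" shows "bounded_op (adj T)"
proof -
  obtain K where K: "K > 0" "\<And>x. norm (T x) \<le> K * norm x" using bounded_op_bound[OF T] by blast
  show ?thesis
  proof (rule bounded_opI[of _ K])
    show "adj T (x + y) = adj T x + adj T y" for x y
      by (rule cinner_ext_right) (simp add: cinner_adj_right[OF T, symmetric] cinner_add_right)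
    show "adj T (scaleC c x) = scaleC c (adj T x)" for c x
      by (rule cinner_ext_right) (simp add: cinner_adj_right[OF T, symmetric] cinner_scaleC_right)
    show "norm (adj T y) \<le> K * norm y" for y using norm_adj_le[OF T K(2)] K(1) by simp
  qed
qed

lemma adj_adj: "bounded_op T \<Longrightarrow> adj (adj T) = T"
  by (intro ext cinner_ext_right) (metis cinner_adj_left cinner_adj_right bounded_op_adj)

lemma contraction_bounded_op: "contraction T \<Longrightarrow> bounded_op T"
  and contraction_norm_le: "contraction T \<Longrightarrow> norm (T x) \<le> norm x"
  unfolding contraction_def by simp_all

lemma contraction_adj:
  assumes "contraction T" shows "contraction (adj T)"
proof -
  have T: "bounded_op T" using assms by (rule contraction_bounded_op)
  show ?thesis unfolding contraction_def
    using bounded_op_adj[OF T] norm_adj_le[OF T, of 1] contraction_norm_le[OF assms] by simp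
qed

section \<open>The binomial series of \<open>sqrt (1 - t)\<close>\<close>

definition sqrt_series_coeff :: "nat \<Rightarrow> real" where
  "sqrt_series_coeff n = (-1)^n * ((1/2) gchoose n)"

lemma sqrt_series_coeff_0 [simp]: "sqrt_series_coeff 0 = 1"
  by (simp add: sqrt_series_coeff_def)

lemma sqrt_series_coeff_nonpos:
  assumes "n \<ge> 1" shows "sqrt_series_coeff n \<le> 0"
proof -
  obtain m where n: "n = Suc m" using assms by (cases n) auto
  define Q where "Q = (\<Prod>i<m. real (Suc m) - 3/2 - real i)"
  have "sqrt_series_coeff n = (-1)^n * ((-1)^n * ((real n - 3/2) gchoose n))"
    unfolding sqrt_series_coeff_def by (subst gbinomial_negated_upper) simp
  also have "\<dots> = (real n - 3/2) gchoose n" by (simp flip: power_mult_distrib)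
  also have "\<dots> = (\<Prod>i\<le>m. real (Suc m) - 3/2 - real i) / fact (Suc m)"
    unfolding n gbinomial_Suc by (simp add: atLeast0AtMost)
  also have "(\<Prod>i\<le>m. real (Suc m) - 3/2 - real i) = Q * (real (Suc m) - 3/2 - real m)"
    unfolding Q_def by (simp add: lessThan_Suc_atMost[symmetric] del: of_nat_Suc)
  finally have eq: "sqrt_series_coeff n = Q * (real (Suc m) - 3/2 - real m) / fact (Suc m)" .
  have "Q \<ge> 0" unfolding Q_def by (rule prod_nonneg) auto
  then show ?thesis unfolding eq by (simp add: mult_nonneg_nonpos divide_nonpos_pos)
qed

lemma sum_sqrt_series_coeff_nonneg: "0 \<le> (\<Sum>k\<le>N. sqrt_series_coeff k)"
proof -
  have "(\<Sum>k\<le>N. sqrt_series_coeff k) = (\<Sum>k\<le>N. ((1/2::real) gchoose k) * (-1)^k)"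
    unfolding sqrt_series_coeff_def by (simp add: mult.commute)
  also have "\<dots> = (-1)^N * ((1/2 - 1) gchoose N)" by (rule gbinomial_sum_lower_neg)
  also have "\<dots> = (real N - 1/2) gchoose N"
    by (subst gbinomial_negated_upper) (simp add: mult.assoc[symmetric] flip: power_mult_distrib)
  also have "\<dots> = (\<Prod>i=0..<N. real N - 1/2 - of_nat i) / fact N" by (rule gbinomial_prod_rev)
  also have "\<dots> \<ge> 0" by (intro divide_nonneg_pos prod_nonneg) auto
  finally show ?thesis .
qed

lemma summable_abs_sqrt_series_coeff: "summable (\<lambda>n. \<bar>sqrt_series_coeff n\<bar>)"
proof (rule summableI_nonneg_bounded[of _ 2])
  fix n
  show "(\<Sum>i<n. \<bar>sqrt_series_coeff i\<bar>) \<le> 2"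
  proof (cases n)
    case (Suc N)
    have "(\<Sum>i<n. \<bar>sqrt_series_coeff i\<bar>)
        = (\<Sum>i<n. (if i = 0 then 2 * sqrt_series_coeff i else 0) - sqrt_series_coeff i)"
    proof (intro sum.cong refl)
      show "\<bar>sqrt_series_coeff i\<bar> = (if i = 0 then 2 * sqrt_series_coeff i else 0) - sqrt_series_coeff i" for i
        using sqrt_series_coeff_nonpos[of i] by (cases "i = 0") auto
    qed
    also have "\<dots> = 2 - (\<Sum>i\<le>N. sqrt_series_coeff i)"
      using Suc by (simp add: sum_subtractf lessThan_Suc_atMost)
    finally show ?thesis using sum_sqrt_series_coeff_nonneg[of N] by simp
  qed simp
qed simp

lemma summable_sqrt_series_coeff: "summable sqrt_series_coeff"
  by (rule summable_rabs_cancel[OF summable_abs_sqrt_series_coeff])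

lemma suminf_sqrt_series_coeff_nonneg: "0 \<le> suminf sqrt_series_coeff"
proof (rule LIMSEQ_le_const)
  show "(\<lambda>n. \<Sum>i<n. sqrt_series_coeff i) \<longlonglongrightarrow> suminf sqrt_series_coeff"
    by (rule summable_LIMSEQ[OF summable_sqrt_series_coeff])
  have "0 \<le> (\<Sum>i<Suc N. sqrt_series_coeff i)" for N
    using sum_sqrt_series_coeff_nonneg[of N] by (simp add: lessThan_Suc_atMost)
  then show "\<exists>N. \<forall>n\<ge>N. 0 \<le> (\<Sum>i<n. sqrt_series_coeff i)"
    by (metis Suc_le_D)
qed

lemma sqrt_series_coeff_convolution:
  "(\<Sum>i\<le>k. sqrt_series_coeff i * sqrt_series_coeff (k - i))
    = (if k = 0 then 1 else if k = 1 then -1 else 0)"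
proof -
  have "sqrt_series_coeff i * sqrt_series_coeff (k - i)
      = (-1)^k * (((1/2::real) gchoose i) * ((1/2) gchoose (k - i)))" if "i \<le> k" for i
  proof -
    have "sqrt_series_coeff i * sqrt_series_coeff (k - i)
        = ((-1)^i * (-1)^(k - i)) * (((1/2::real) gchoose i) * ((1/2) gchoose (k - i)))"
      unfolding sqrt_series_coeff_def by (simp only: mult_ac)
    also have "(-1::real)^i * (-1)^(k - i) = (-1)^k" using that by (simp flip: power_add)
    finally show ?thesis .
  qed
  then have "(\<Sum>i\<le>k. sqrt_series_coeff i * sqrt_series_coeff (k - i))
      = (-1)^k * (\<Sum>i=0..k. ((1/2::real) gchoose i) * ((1/2) gchoose (k - i)))"
    by (simp add: sum_distrib_left atMost_atLeast0)
  also have "(\<Sum>i=0..k. ((1/2::real) gchoose i) * ((1/2) gchoose (k - i))) = of_nat (1 choose k)"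
    by (simp only: gbinomial_Vandermonde binomial_gbinomial) simp
  also have "(-1::real)^k * of_nat (1 choose k) = (if k = 0 then 1 else if k = 1 then -1 else 0)"
    by (cases k) (auto simp: binomial_eq_0)
  finally show ?thesis .
qed

section \<open>Positive operators\<close>

lemma positive_op_bounded: "positive_op R \<Longrightarrow> bounded_op R"
  and positive_op_cinner_real: "positive_op R \<Longrightarrow> cinner (R x) x \<in> \<real>"
  and positive_op_Re_cinner_nonneg: "positive_op R \<Longrightarrow> 0 \<le> Re (cinner (R x) x)"
  unfolding positive_op_def by simp_all

text \<open>Polarization: a sesquilinear form that is real on the diagonal is hermitian.\<close>

lemma positive_op_self_adjoint:
  assumes P: "positive_op R" shows "cinner (R x) y = cinner x (R y)"
proof -
  have R: "bounded_op R" using P by (rule positive_op_bounded)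
  define D where "D a b = cinner (R a) b - cinner a (R b)" for a b
  have Duu: "D u u = 0" for u
    using positive_op_cinner_real[OF P, of u] unfolding D_def
    by (metis Reals_cnj_iff cinner_commute diff_self)
  have Dsum: "D (a + scaleC t b) (a + scaleC t b) = D a a + cnj t * D a b + t * D b a + t * cnj t * D b b"
    for a b t unfolding D_def
    by (simp add: bounded_op_add[OF R] bounded_op_scaleC[OF R] cinner_simps algebra_simps)
  have sum_zero: "D x y + D y x = 0" using Dsum[of x 1 y] by (simp add: Duu)
  have "- \<i> * D x y + \<i> * D y x = 0" using Dsum[of x \<i> y] by (simp add: Duu)
  then have "\<i> * (D y x - D x y) = 0" by (simp add: algebra_simps)
  then have "D y x = D x y" by simp
  then have "D x y = 0" using sum_zero by simp
  then show ?thesis unfolding D_def by simp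
qed

lemma positive_op_form_zero_imp_zero:
  assumes P: "positive_op R" and zero: "Re (cinner (R u) u) = 0"
  shows "R u = 0"
proof -
  have R: "bounded_op R" using P by (rule positive_op_bounded)
  define a where "a = (norm (R u))\<^sup>2"
  define c where "c = Re (cinner (R (R u)) (R u))"
  have "c \<ge> 0" unfolding c_def by (rule positive_op_Re_cinner_nonneg[OF P])
  have quadratic: "0 \<le> 2 * t * a + t\<^sup>2 * c" for t :: real
  proof -
    define v where "v = u + scaleC (of_real t) (R u)"
    have "cinner (R v) v = cinner (R u) u + of_real t * cinner (R u) (R u)
        + of_real t * cinner (R (R u)) u + of_real t * of_real t * cinner (R (R u)) (R u)"
      unfolding v_def by (simp add: bounded_op_add[OF R] bounded_op_scaleC[OF R] cinner_simps algebra_simps)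
    also have "cinner (R (R u)) u = cinner (R u) (R u)" by (rule positive_op_self_adjoint[OF P])
    finally have "Re (cinner (R v) v) = 2 * t * a + t\<^sup>2 * c"
      using zero by (simp add: a_def c_def cinner_self_norm[of "R u"] power2_eq_square)
    then show ?thesis using positive_op_Re_cinner_nonneg[OF P, of v] by simp
  qed
  have "a = 0"
  proof (rule ccontr)
    assume "a \<noteq> 0"
    then have "a > 0" unfolding a_def by simp
    define t where "t = - a / (c + 1)"
    have "t * (c + 1) = - a" unfolding t_def using \<open>c \<ge> 0\<close> by simp
    have "0 \<le> (2 * t * a + t\<^sup>2 * c) * (c + 1)\<^sup>2" using quadratic[of t] by simp
    also have "\<dots> = 2 * a * (t * (c + 1)) * (c + 1) + (t * (c + 1))\<^sup>2 * c"
      by (simp add: power2_eq_square algebra_simps)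
    also have "\<dots> = - (a * a) * (c + 2)"
      unfolding \<open>t * (c + 1) = - a\<close> by (simp add: power2_eq_square algebra_simps)
    also have "\<dots> < 0" using \<open>a > 0\<close> \<open>c \<ge> 0\<close> by (intro mult_neg_pos) auto
    finally show False by simp
  qed
  then show ?thesis unfolding a_def by simp
qed

lemma closure_range_positive_op:
  assumes P: "positive_op R"
  shows "closure (range R) = orthogonal_complement {x. R x = 0}"
proof -
  have R: "bounded_op R" using P by (rule positive_op_bounded)
  have "csubspace (range R)"
    unfolding csubspace_def
  proof (intro conjI ballI allI)
    show "0 \<in> range R" using bounded_op_zero[OF R] by (metis rangeI)
    show "a + b \<in> range R" if "a \<in> range R" "b \<in> range R" for a b
      using that by (auto simp: bounded_op_add[OF R, symmetric])
    show "scaleC c a \<in> range R" if "a \<in> range R" for a c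
      using that by (auto simp: bounded_op_scaleC[OF R, symmetric])
  qed
  then have M: "csubspace (closure (range R))" "closed (closure (range R))"
    by (simp_all add: csubspace_closure)
  have "orthogonal_complement (closure (range R)) = {x. R x = 0}"
  proof -
    have "x \<in> orthogonal_complement (range R) \<longleftrightarrow> R x = 0" for x
    proof
      assume "x \<in> orthogonal_complement (range R)"
      then have "cinner (R x) y = 0" for y
        using positive_op_self_adjoint[OF P, of x y] by (auto dest: orthogonal_complementD)
      then show "R x = 0" by (rule cinner_all_zero_imp_zero)
    qed (auto intro!: orthogonal_complementI simp: positive_op_self_adjoint[OF P, symmetric])
    then show ?thesis by (auto simp: orthogonal_complement_closure)
  qed
  then show ?thesis using orthogonal_complement_orthogonal_complement[OF M] by simp
qed

lemma kernel_positive_op_square: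
  assumes P: "positive_op R"
  shows "{x. R (R x) = 0} = {x. R x = 0}"
proof -
  have "R x = 0" if "R (R x) = 0" for x
  proof -
    have "cinner (R x) (R x) = cinner (R (R x)) x" by (rule positive_op_self_adjoint[OF P, symmetric])
    then show ?thesis using that by simp
  qed
  then show ?thesis using bounded_op_zero[OF positive_op_bounded[OF P]] by auto
qed

section \<open>The square root of \<open>I - S\<^sup>* S\<close> for a contraction \<open>S\<close>\<close>

lemma abs_summable_on_product_bound:
  fixes v :: "nat \<times> nat \<Rightarrow> 'b::real_normed_vector" and a b :: "nat \<Rightarrow> real"
  assumes a: "\<And>i. 0 \<le> a i" "summable a" and b: "\<And>j. 0 \<le> b j" "summable b"
    and bound: "\<And>i j. norm (v (i, j)) \<le> a i * b j"
  shows "(\<lambda>p. norm (v p)) summable_on UNIV"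
proof (rule nonneg_bdd_above_summable_on)
  show "bdd_above (sum (\<lambda>p. norm (v p)) ` {F. F \<subseteq> UNIV \<and> finite F})"
  proof (rule bdd_aboveI2[where M = "suminf a * suminf b"], clarsimp)
    fix F :: "(nat \<times> nat) set" assume "finite F"
    have "sum (\<lambda>p. norm (v p)) F \<le> sum (\<lambda>p. norm (v p)) (fst ` F \<times> snd ` F)"
      using \<open>finite F\<close> by (intro sum_mono2) (auto simp: subset_fst_snd)
    also have "\<dots> \<le> (\<Sum>(i, j)\<in>fst ` F \<times> snd ` F. a i * b j)"
      by (rule sum_mono) (use bound in auto)
    also have "\<dots> = (\<Sum>i\<in>fst ` F. a i) * (\<Sum>j\<in>snd ` F. b j)"
      by (simp add: sum_product sum.cartesian_product)
    also have "\<dots> \<le> suminf a * suminf b"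
      using \<open>finite F\<close> by (intro mult_mono sum_le_suminf sum_nonneg suminf_nonneg) (auto simp: a b)
    finally show "sum (\<lambda>p. norm (v p)) F \<le> suminf a * suminf b" .
  qed
qed simp

lemma diagonal_sum_eq_iterated_sum:
  fixes v :: "nat \<times> nat \<Rightarrow> 'b::banach" and a b :: "nat \<Rightarrow> real"
  assumes a: "\<And>i. 0 \<le> a i" "summable a" and b: "\<And>j. 0 \<le> b j" "summable b"
    and bound: "\<And>i j. norm (v (i, j)) \<le> a i * b j"
    and rows: "\<And>i. ((\<lambda>j. v (i, j)) has_sum r i) UNIV" and "(r has_sum S) UNIV"
    and diagonals: "((\<lambda>k. \<Sum>i\<le>k. v (i, k - i)) has_sum D) UNIV"
  shows "S = D"
proof -
  have "v summable_on UNIV"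
    by (rule abs_summable_summable[OF abs_summable_on_product_bound[OF a b bound]])
  define V where "V = infsum v UNIV"
  then have V: "(v has_sum V) (Sigma UNIV (\<lambda>_. UNIV))" using \<open>v summable_on UNIV\<close> by simp
  have "(r has_sum V) UNIV" by (rule has_sum_SigmaD[OF V rows])
  moreover have "((\<lambda>(k, i). v (i, k - i)) has_sum V) (Sigma UNIV (\<lambda>k. {..k}))
      \<longleftrightarrow> (v has_sum V) (Sigma UNIV (\<lambda>_. UNIV))"
    by (rule has_sum_reindex_bij_witness[where j = "\<lambda>(k, i). (i, k - i)" and i = "\<lambda>(i, j). (i + j, i)"]) auto
  then have "((\<lambda>(k, i). v (i, k - i)) has_sum V) (Sigma UNIV (\<lambda>k. {..k}))" using V by simp
  then have "((\<lambda>k. \<Sum>i\<le>k. v (i, k - i)) has_sum V) UNIV"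
    by (rule has_sum_SigmaD) simp
  ultimately show ?thesis using assms(7) diagonals has_sum_unique by blast
qed

definition abs_sq :: "('a::chilbert \<Rightarrow> 'a) \<Rightarrow> 'a \<Rightarrow> 'a" where
  "abs_sq S x = adj S (S x)"

definition defect_sqrt :: "('a::chilbert \<Rightarrow> 'a) \<Rightarrow> 'a \<Rightarrow> 'a" where
  "defect_sqrt S x = (\<Sum>n. sqrt_series_coeff n *\<^sub>R (abs_sq S ^^ n) x)"

context
  fixes S :: "'a::chilbert \<Rightarrow> 'a"
  assumes S: "contraction S"
begin

lemma bounded_op_abs_sq_pow: "bounded_op (abs_sq S ^^ n)"
proof (rule bounded_op_funpow)
  have Sb: "bounded_op S" using S by (rule contraction_bounded_op)
  show "bounded_op (abs_sq S)"
    unfolding abs_sq_def[abs_def] by (rule bounded_op_comp[OF bounded_op_adj[OF Sb] Sb])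
qed

lemma cinner_abs_sq: "cinner (abs_sq S x) y = cinner (S x) (S y)"
  using S unfolding abs_sq_def contraction_def by (simp add: cinner_adj_left)

lemma abs_sq_pow_self_adjoint: "cinner ((abs_sq S ^^ n) x) y = cinner x ((abs_sq S ^^ n) y)"
proof (induction n arbitrary: x y)
  case (Suc n)
  have "cinner ((abs_sq S ^^ Suc n) x) y = cinner ((abs_sq S ^^ n) x) (abs_sq S y)"
    using S unfolding abs_sq_def contraction_def by (simp add: cinner_adj_left cinner_adj_right)
  also have "\<dots> = cinner x ((abs_sq S ^^ Suc n) y)" by (simp add: Suc.IH funpow_swap1)
  finally show ?case .
qed simp

lemma norm_abs_sq_pow_le: "norm ((abs_sq S ^^ n) x) \<le> norm x"
proof (induction n)
  case (Suc n)
  have "norm (abs_sq S y) \<le> norm y" for y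
    using contraction_adj[OF S] S unfolding abs_sq_def contraction_def by (meson order.trans)
  then show ?case using Suc.IH order.trans by auto
qed simp

lemma cinner_abs_sq_pow_real: "cinner ((abs_sq S ^^ n) x) x \<in> \<real>"
  by (metis Reals_cnj_iff abs_sq_pow_self_adjoint cinner_commute)

lemma Re_cinner_abs_sq_pow_nonneg: "0 \<le> Re (cinner ((abs_sq S ^^ n) x) x)"
proof -
  have "\<exists>m. n = m + m \<or> n = Suc (m + m)" by presburger
  then obtain m where "n = m + m \<or> n = Suc (m + m)" by blast
  then have "cinner ((abs_sq S ^^ n) x) x = cinner ((abs_sq S ^^ m) x) ((abs_sq S ^^ m) x)
      \<or> cinner ((abs_sq S ^^ n) x) x = cinner (S ((abs_sq S ^^ m) x)) (S ((abs_sq S ^^ m) x))"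
  proof
    assume "n = m + m"
    then have "(abs_sq S ^^ n) x = (abs_sq S ^^ m) ((abs_sq S ^^ m) x)" by (simp add: funpow_add)
    then show ?thesis by (simp add: abs_sq_pow_self_adjoint)
  next
    assume "n = Suc (m + m)"
    then have "(abs_sq S ^^ n) x = (abs_sq S ^^ m) (abs_sq S ((abs_sq S ^^ m) x))"
      by (simp only: funpow.simps(2) funpow_add comp_apply funpow_swap1)
    then show ?thesis by (simp add: abs_sq_pow_self_adjoint cinner_abs_sq)
  qed
  then show ?thesis by (auto simp: cinner_self_norm)
qed

lemma Re_cinner_abs_sq_pow_le: "Re (cinner ((abs_sq S ^^ n) x) x) \<le> (norm x)\<^sup>2"
proof -
  have "Re (cinner ((abs_sq S ^^ n) x) x) \<le> norm ((abs_sq S ^^ n) x) * norm x"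
    by (rule order_trans[OF complex_Re_le_cmod cinner_cauchy_schwarz])
  also have "\<dots> \<le> norm x * norm x" by (rule mult_right_mono[OF norm_abs_sq_pow_le]) simp
  finally show ?thesis by (simp add: power2_eq_square)
qed

lemma norm_defect_sqrt_term_le:
  "norm (sqrt_series_coeff n *\<^sub>R (abs_sq S ^^ n) x) \<le> \<bar>sqrt_series_coeff n\<bar> * norm x"
  using norm_abs_sq_pow_le[of n x] by (simp add: mult_left_mono)

lemma summable_norm_defect_sqrt_series:
  "summable (\<lambda>n. norm (sqrt_series_coeff n *\<^sub>R (abs_sq S ^^ n) x))"
  by (rule summable_comparison_test'[OF summable_mult2[OF summable_abs_sqrt_series_coeff, of "norm x"]])
     (use norm_abs_sq_pow_le in \<open>auto intro: mult_left_mono\<close>)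

lemma defect_sqrt_sums: "(\<lambda>n. sqrt_series_coeff n *\<^sub>R (abs_sq S ^^ n) x) sums defect_sqrt S x"
  unfolding defect_sqrt_def by (rule summable_sums[OF summable_norm_cancel[OF summable_norm_defect_sqrt_series]])

lemma bounded_op_defect_sqrt: "bounded_op (defect_sqrt S)"
proof (rule bounded_opI[of _ "\<Sum>n. \<bar>sqrt_series_coeff n\<bar>"])
  show "defect_sqrt S (x + y) = defect_sqrt S x + defect_sqrt S y" for x y
    using sums_add[OF defect_sqrt_sums defect_sqrt_sums, of x y] defect_sqrt_sums[of "x + y"]
    by (simp add: bounded_op_add[OF bounded_op_abs_sq_pow] scaleR_add_right sums_unique2)
  show "defect_sqrt S (scaleC c x) = scaleC c (defect_sqrt S x)" for c x
    using bounded_linear.sums[OF bounded_linear_scaleC defect_sqrt_sums, of c x] defect_sqrt_sums[of "scaleC c x"]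
    by (simp add: bounded_op_scaleC[OF bounded_op_abs_sq_pow] scaleC_scaleR sums_unique2)
  show "norm (defect_sqrt S x) \<le> (\<Sum>n. \<bar>sqrt_series_coeff n\<bar>) * norm x" for x
  proof -
    have "norm (defect_sqrt S x) \<le> (\<Sum>n. norm (sqrt_series_coeff n *\<^sub>R (abs_sq S ^^ n) x))"
      unfolding defect_sqrt_def by (rule summable_norm[OF summable_norm_defect_sqrt_series])
    also have "\<dots> \<le> (\<Sum>n. \<bar>sqrt_series_coeff n\<bar> * norm x)"
      by (intro suminf_le summable_norm_defect_sqrt_series norm_defect_sqrt_term_le
          summable_mult2 summable_abs_sqrt_series_coeff)
    also have "\<dots> = (\<Sum>n. \<bar>sqrt_series_coeff n\<bar>) * norm x"
      by (rule suminf_mult2[symmetric, OF summable_abs_sqrt_series_coeff])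
    finally show ?thesis .
  qed
qed

text \<open>Squaring the series termwise is justified by absolute convergence; the Cauchy square of
  the coefficients is \<open>1 - t\<close>.\<close>

lemma defect_sqrt_square: "defect_sqrt S (defect_sqrt S x) = x - adj S (S x)"
proof -
  let ?c = sqrt_series_coeff and ?B = "\<lambda>n. abs_sq S ^^ n"
  define v where "v p = (?c (fst p) * ?c (snd p)) *\<^sub>R ?B (fst p + snd p) x" for p
  have bound: "norm (v (i, j)) \<le> (\<bar>?c i\<bar> * norm x) * \<bar>?c j\<bar>" for i j
  proof -
    have "norm (v (i, j)) = (\<bar>?c i\<bar> * \<bar>?c j\<bar>) * norm (?B (i + j) x)" by (simp add: v_def abs_mult)
    also have "\<dots> \<le> (\<bar>?c i\<bar> * \<bar>?c j\<bar>) * norm x" by (rule mult_left_mono[OF norm_abs_sq_pow_le]) simp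
    finally show ?thesis by (simp add: mult_ac)
  qed
  have row: "((\<lambda>j. v (i, j)) has_sum ?c i *\<^sub>R ?B i (defect_sqrt S x)) UNIV" for i
  proof (rule norm_summable_imp_has_sum)
    show "summable (\<lambda>j. norm (v (i, j)))"
      by (rule summable_comparison_test'[OF summable_mult[OF summable_abs_sqrt_series_coeff]])
         (use bound in auto)
    have "(\<lambda>j. ?c i *\<^sub>R ?B i (?c j *\<^sub>R ?B j x)) sums (?c i *\<^sub>R ?B i (defect_sqrt S x))"
      by (intro sums_scaleR_right bounded_linear.sums[OF bounded_op_linear[OF bounded_op_abs_sq_pow]]
          defect_sqrt_sums)
    then show "(\<lambda>j. v (i, j)) sums (?c i *\<^sub>R ?B i (defect_sqrt S x))"
      by (simp add: v_def bounded_op_scaleR[OF bounded_op_abs_sq_pow] funpow_add)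
  qed
  have diagonal: "(\<Sum>i\<le>k. v (i, k - i))
      = (if k = 0 then 1 else if k = 1 then -1 else 0) *\<^sub>R ?B k x" for k
  proof -
    have "(\<Sum>i\<le>k. v (i, k - i)) = (\<Sum>i\<le>k. ?c i * ?c (k - i)) *\<^sub>R ?B k x"
      by (simp add: v_def scaleR_sum_left)
    then show ?thesis by (simp add: sqrt_series_coeff_convolution)
  qed
  show ?thesis
  proof (rule diagonal_sum_eq_iterated_sum[OF _ _ _ _ bound row])
    show "((\<lambda>i. ?c i *\<^sub>R ?B i (defect_sqrt S x)) has_sum defect_sqrt S (defect_sqrt S x)) UNIV"
      by (rule norm_summable_imp_has_sum[OF summable_norm_defect_sqrt_series defect_sqrt_sums])
    show "((\<lambda>k. \<Sum>i\<le>k. v (i, k - i)) has_sum x - adj S (S x)) UNIV"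
      unfolding diagonal by (rule has_sum_finite_neutralI[where B = "{0, 1}"]) (auto simp: abs_sq_def)
  qed (auto intro: summable_mult2 summable_abs_sqrt_series_coeff)
qed

lemma positive_op_defect_sqrt: "positive_op (defect_sqrt S)"
  unfolding positive_op_def
proof (intro conjI allI bounded_op_defect_sqrt)
  fix x
  let ?c = sqrt_series_coeff
  define b where "b n = Re (cinner ((abs_sq S ^^ n) x) x)" for n
  have b: "0 \<le> b n" "b n \<le> (norm x)\<^sup>2" for n
    unfolding b_def by (rule Re_cinner_abs_sq_pow_nonneg, rule Re_cinner_abs_sq_pow_le)
  have summable: "summable (\<lambda>n. ?c n * b n)"
  proof (rule summable_comparison_test'[OF summable_mult2[OF summable_abs_sqrt_series_coeff, of "(norm x)\<^sup>2"]])
    show "norm (?c n * b n) \<le> \<bar>?c n\<bar> * (norm x)\<^sup>2" for n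
      using b[of n] by (simp add: abs_mult mult_left_mono)
  qed
  have "cinner (?c n *\<^sub>R (abs_sq S ^^ n) x) x = of_real (?c n * b n)" for n
    using of_real_Re[OF cinner_abs_sq_pow_real[of n x]] by (simp add: b_def cinner_scaleR_left)
  moreover have "(\<lambda>n. cinner (?c n *\<^sub>R (abs_sq S ^^ n) x) x) sums cinner (defect_sqrt S x) x"
    by (rule bounded_linear.sums[OF bounded_bilinear.bounded_linear_left[OF bounded_bilinear_cinner]
          defect_sqrt_sums])
  ultimately have "(\<lambda>n. complex_of_real (?c n * b n)) sums cinner (defect_sqrt S x) x" by simp
  then have eq: "cinner (defect_sqrt S x) x = of_real (\<Sum>n. ?c n * b n)"
    using sums_of_real[OF summable_sums[OF summable]] by (rule sums_unique2)
  then show "cinner (defect_sqrt S x) x \<in> \<real>" by simp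
  text \<open>Every coefficient but the first is \<open>\<le> 0\<close>, and the coefficients sum to \<open>\<ge> 0\<close>.\<close>
  have "0 \<le> suminf ?c * (norm x)\<^sup>2" using suminf_sqrt_series_coeff_nonneg by simp
  also have "\<dots> = (\<Sum>n. ?c n * (norm x)\<^sup>2)" by (rule suminf_mult2[OF summable_sqrt_series_coeff])
  also have "\<dots> \<le> (\<Sum>n. ?c n * b n)"
  proof (rule suminf_le[OF _ summable_mult2[OF summable_sqrt_series_coeff] summable])
    show "?c n * (norm x)\<^sup>2 \<le> ?c n * b n" for n
    proof (cases "n = 0")
      case True
      then show ?thesis by (simp add: b_def norm_sq_cinner)
    next
      case False
      then show ?thesis using sqrt_series_coeff_nonpos[of n] b(2)[of n] by (simp add: mult_left_mono_neg)
    qed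
  qed
  finally show "0 \<le> Re (cinner (defect_sqrt S x) x)" by (simp add: eq)
qed

lemma defect_sqrt_unique:
  assumes P: "positive_op R" and square: "\<And>x. R (R x) = x - adj S (S x)"
  shows "R = defect_sqrt S"
proof
  fix x
  let ?Q = "defect_sqrt S"
  have R: "bounded_op R" using P by (rule positive_op_bounded)
  have Q: "positive_op ?Q" by (rule positive_op_defect_sqrt)
  have "R (abs_sq S y) = abs_sq S (R y)" for y
    using square[of y] square[of "R y"] by (simp add: abs_sq_def bounded_op_diff[OF R])
  then have "R ((abs_sq S ^^ n) y) = (abs_sq S ^^ n) (R y)" for n y
    by (induction n) simp_all
  then have commute: "R (?Q x) = ?Q (R x)"
    unfolding defect_sqrt_def
    by (simp add: bounded_linear.suminf[OF bounded_op_linear[OF R] summable_norm_cancel[OF summable_norm_defect_sqrt_series]]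
        bounded_op_scaleR[OF R])
  define y where "y = ?Q x - R x"
  have "?Q y + R y = 0"
    unfolding y_def
    by (simp add: bounded_op_diff[OF R] bounded_op_diff[OF positive_op_bounded[OF Q]] defect_sqrt_square square commute)
  then have "Re (cinner (?Q y) y) + Re (cinner (R y) y) = 0"
    by (metis cinner_add_left cinner_zero_left plus_complex.sel(1) zero_complex.sel(1))
  then have "?Q y = 0" "R y = 0"
    using positive_op_Re_cinner_nonneg[OF Q, of y] positive_op_Re_cinner_nonneg[OF P, of y]
    by (auto intro!: positive_op_form_zero_imp_zero[OF Q] positive_op_form_zero_imp_zero[OF P])
  have "cinner y y = cinner (?Q x) y - cinner (R x) y" unfolding y_def by (simp add: cinner_diff_left)
  also have "\<dots> = cinner x (?Q y) - cinner x (R y)"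
    by (simp add: positive_op_self_adjoint[OF Q] positive_op_self_adjoint[OF P])
  finally have "cinner y y = 0" using \<open>?Q y = 0\<close> \<open>R y = 0\<close> by simp
  then show "R x = ?Q x" unfolding y_def by simp
qed

lemma op_sqrt_defect: "op_sqrt (\<lambda>x. x - adj S (S x)) = defect_sqrt S"
  unfolding op_sqrt_def
proof (rule the_equality)
  show "positive_op (defect_sqrt S) \<and> defect_sqrt S \<circ> defect_sqrt S = (\<lambda>x. x - adj S (S x))"
    using positive_op_defect_sqrt defect_sqrt_square by auto
  show "positive_op R \<and> R \<circ> R = (\<lambda>x. x - adj S (S x)) \<Longrightarrow> R = defect_sqrt S" for R
    by (rule defect_sqrt_unique) (auto dest: fun_cong)
qed

end

section \<open>Defect spaces\<close>

lemma fixed_points_closed_subspace: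
  assumes "bounded_op A"
  shows "csubspace {x. A x = x}" "closed {x. A x = x}"
proof -
  have "bounded_op (\<lambda>x. x - A x)" by (rule bounded_op_diff_fun[OF bounded_op_id assms])
  from csubspace_kernel[OF this] closed_kernel[OF this]
  show "csubspace {x. A x = x}" "closed {x. A x = x}" by (simp_all add: eq_commute[of "A _"])
qed

lemma defect_space_eq:
  assumes T: "contraction T"
  shows "defect_space T = orthogonal_complement {x. adj T (T x) = x}"
proof -
  have "{x. defect_sqrt T x = 0} = {x. defect_sqrt T (defect_sqrt T x) = 0}"
    by (rule kernel_positive_op_square[OF positive_op_defect_sqrt[OF T], symmetric])
  also have "\<dots> = {x. adj T (T x) = x}" by (auto simp: defect_sqrt_square[OF T])
  finally show ?thesis
    unfolding defect_space_def op_sqrt_defect[OF T] closure_range_positive_op[OF positive_op_defect_sqrt[OF T]]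
    by simp
qed

lemma defect_space_adj_eq:
  assumes T: "contraction T"
  shows "defect_space_adj T = orthogonal_complement {x. T (adj T x) = x}"
  using defect_space_eq[OF contraction_adj[OF T]]
  by (simp add: defect_space_def defect_space_adj_def adj_adj[OF contraction_bounded_op[OF T]])

lemma norm_diff_adj_comp_square_le:
  assumes T: "contraction T"
  shows "(norm (x - adj T (T x)))\<^sup>2 \<le> (norm x)\<^sup>2 - (norm (T x))\<^sup>2"
proof -
  have Tb: "bounded_op T" using T by (rule contraction_bounded_op)
  have "Re (cinner x (adj T (T x))) = (norm (T x))\<^sup>2"
    by (simp add: cinner_adj_right[OF Tb, symmetric] norm_sq_cinner)
  moreover have "norm (adj T (T x)) \<le> norm (T x)" by (rule contraction_norm_le[OF contraction_adj[OF T]])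
  then have "(norm (adj T (T x)))\<^sup>2 \<le> (norm (T x))\<^sup>2" by (simp add: power_mono)
  ultimately show ?thesis
    using norm_add_square[of x "- adj T (T x)"] by (simp add: cinner_minus_right)
qed

lemma contraction_norm_eq_imp_adj_fixed:
  assumes "contraction T" "norm (T x) = norm x"
  shows "adj T (T x) = x"
  using norm_diff_adj_comp_square_le[OF assms(1), of x] assms(2) by simp

lemma completely_non_unitary_trivial_subspace:
  assumes cnu: "completely_non_unitary T" and M: "csubspace M" "closed M"
    and invariant: "T ` M \<subseteq> M" "adj T ` M \<subseteq> M"
    and fixed: "\<And>x. x \<in> M \<Longrightarrow> adj T (T x) = x" "\<And>x. x \<in> M \<Longrightarrow> T (adj T x) = x"
  shows "M = {0}"
proof -
  have T: "bounded_op T" using cnu by (simp add: completely_non_unitary_def contraction_def)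
  have "reducing_subspace T M" using M invariant by (simp add: reducing_subspace_def)
  moreover have "unitary_on T M"
    unfolding unitary_on_def
  proof (intro conjI ballI)
    show "norm (T x) = norm x" if "x \<in> M" for x
    proof -
      have "cinner (T x) (T x) = cinner x x" using fixed(1)[OF that] by (simp add: cinner_adj_right[OF T])
      then have "(norm (T x))\<^sup>2 = (norm x)\<^sup>2" by (simp add: norm_sq_cinner)
      then show ?thesis by simp
    qed
    show "T ` M = M"
    proof
      show "M \<subseteq> T ` M"
      proof
        fix x assume "x \<in> M"
        then have "x = T (adj T x)" using fixed(2) by simp
        then show "x \<in> T ` M" using invariant(2) \<open>x \<in> M\<close> by blast
      qed
    qed (fact invariant(1))
  qed
  ultimately show ?thesis
    using cnu M(1) unfolding completely_non_unitary_def csubspace_def by blast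
qed

definition orthonormal_on :: "nat set \<Rightarrow> (nat \<Rightarrow> 'a::chilbert) \<Rightarrow> bool" where
  "orthonormal_on I e \<longleftrightarrow> (\<forall>m\<in>I. \<forall>n\<in>I. cinner (e m) (e n) = (if m = n then 1 else 0))"

lemma orthonormal_onD:
  "orthonormal_on I e \<Longrightarrow> m \<in> I \<Longrightarrow> n \<in> I \<Longrightarrow> cinner (e m) (e n) = (if m = n then 1 else 0)"
  unfolding orthonormal_on_def by blast

lemma orthonormal_on_subset: "orthonormal_on I e \<Longrightarrow> J \<subseteq> I \<Longrightarrow> orthonormal_on J e"
  unfolding orthonormal_on_def by blast

lemma orthonormal_basis_nat_orthonormal_on: "orthonormal_basis_nat e \<Longrightarrow> orthonormal_on I e"
  unfolding orthonormal_basis_nat_def orthonormal_on_def by simp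

lemma orthonormal_on_inj_on: "orthonormal_on I e \<Longrightarrow> inj_on e I"
  by (rule inj_onI) (metis orthonormal_onD one_neq_zero)

lemma cinner_orthonormal_sum:
  assumes "orthonormal_on I e" "J \<subseteq> I" "finite J" "j \<in> I"
  shows "cinner (\<Sum>i\<in>J. scaleC (c i) (e i)) (e j) = (if j \<in> J then c j else 0)"
proof -
  have "cinner (\<Sum>i\<in>J. scaleC (c i) (e i)) (e j) = (\<Sum>i\<in>J. if i = j then c i else 0)"
    using assms by (intro trans[OF cinner_sum_left sum.cong]) (auto simp: cinner_scaleC_left orthonormal_onD)
  then show ?thesis using assms(3) by simp
qed

lemma of_real_sum_cmod_square: "complex_of_real (\<Sum>i\<in>I. (cmod (c i))\<^sup>2) = (\<Sum>i\<in>I. c i * cnj (c i))"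
  by (simp only: of_real_sum complex_norm_square)

lemma norm_orthonormal_sum_square:
  assumes "orthonormal_on J e" "finite J"
  shows "(norm (\<Sum>i\<in>J. scaleC (c i) (e i)))\<^sup>2 = (\<Sum>i\<in>J. (cmod (c i))\<^sup>2)"
proof -
  have "cinner (\<Sum>i\<in>J. scaleC (c i) (e i)) (\<Sum>j\<in>J. scaleC (c j) (e j)) = (\<Sum>j\<in>J. c j * cnj (c j))"
    using cinner_orthonormal_sum[OF assms(1) order.refl assms(2)]
    by (simp add: cinner_sum_right cinner_scaleC_right mult.commute)
  also have "\<dots> = of_real (\<Sum>i\<in>J. (cmod (c i))\<^sup>2)" by (rule of_real_sum_cmod_square[symmetric])
  finally show ?thesis by (simp add: norm_sq_cinner)
qed

lemma orthonormal_span_expansion: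
  assumes e: "orthonormal_on J e" and "finite J" and x: "x \<in> cvs.span (e ` J)"
  shows "x = (\<Sum>i\<in>J. scaleC (cinner x (e i)) (e i))"
proof -
  define P where "P x = (\<Sum>i\<in>J. scaleC (cinner x (e i)) (e i))" for x
  have "P (x + y) = P x + P y" "P (scaleC c x) = scaleC c (P x)" "P 0 = 0" for x y c
    by (simp_all add: P_def cinner_add_left scaleC_add_left sum.distrib cinner_scaleC_left
        scaleC_sum_right scaleC_scaleC)
  then have "cvs.subspace {x. P x = x}" by (simp add: cvs.subspace_def)
  moreover have "P (e j) = e j" if "j \<in> J" for j
    using cinner_orthonormal_sum[OF e order.refl \<open>finite J\<close> that, of "\<lambda>i. 1"] that \<open>finite J\<close> e
    by (simp add: P_def orthonormal_onD if_distrib[of "\<lambda>c. scaleC c _"] cong: if_cong)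
  ultimately have "P x = x" by (intro cvs.span_induct[OF x, of "\<lambda>x. P x = x"]) auto
  then show ?thesis by (simp add: P_def)
qed

lemma orthogonal_complement_orthogonal_complement_orthonormal:
  assumes e: "orthonormal_on J e" and J: "finite J"
  shows "orthogonal_complement (orthogonal_complement (e ` J)) = cvs.span (e ` J)"
proof
  have "cvs.span (e ` J) \<subseteq> orthogonal_complement (orthogonal_complement (cvs.span (e ` J)))"
    by (auto intro!: orthogonal_complementI dest: orthogonal_complementD')
  then show "cvs.span (e ` J) \<subseteq> orthogonal_complement (orthogonal_complement (e ` J))"
    by (simp add: orthogonal_complement_span)
next
  show "orthogonal_complement (orthogonal_complement (e ` J)) \<subseteq> cvs.span (e ` J)"
  proof
    fix y assume y: "y \<in> orthogonal_complement (orthogonal_complement (e ` J))"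
    define p where "p = (\<Sum>i\<in>J. scaleC (cinner y (e i)) (e i))"
    have p: "p \<in> cvs.span (e ` J)"
      unfolding p_def by (intro cvs.span_sum cvs.span_scale cvs.span_base) auto
    have "cinner (y - p) (e j) = 0" if "j \<in> J" for j
      using cinner_orthonormal_sum[OF e order.refl J that] that by (simp add: p_def cinner_diff_left)
    then have yp: "y - p \<in> orthogonal_complement (e ` J)"
      by (auto intro!: orthogonal_complementI)
    have "cinner y (y - p) = 0" using y yp by (rule orthogonal_complementD)
    moreover have "y - p \<in> orthogonal_complement (cvs.span (e ` J))"
      using yp by (simp only: orthogonal_complement_span)
    then have "cinner p (y - p) = 0" using p by (rule orthogonal_complementD')
    ultimately have "cinner (y - p) (y - p) = 0" by (simp add: cinner_diff_left)
    then show "y \<in> cvs.span (e ` J)" using p by simp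
  qed
qed

lemma has_cdim_orthonormal_span:
  assumes e: "orthonormal_on J e" and "finite J"
  shows "has_cdim (cvs.span (e ` J)) (card J)"
  unfolding has_cdim_def
proof (intro exI[of _ "e ` J"] conjI)
  show "cindependent (e ` J)"
    unfolding cindependent_def
  proof (intro allI impI ballI, elim conjE)
    fix B c b assume B: "finite B" "B \<subseteq> e ` J" "(\<Sum>v\<in>B. scaleC (c v) v) = 0" and "b \<in> B"
    then obtain n where n: "n \<in> J" "b = e n" by blast
    have "cinner v (e n) = (if v = e n then 1 else 0)" if "v \<in> B" for v
      using that B(2) n(1) orthonormal_on_inj_on[OF e] by (auto simp: orthonormal_onD[OF e] inj_on_eq_iff)
    then have "cinner (\<Sum>v\<in>B. scaleC (c v) v) (e n) = (\<Sum>v\<in>B. if v = e n then c v else 0)"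
      unfolding cinner_sum_left by (intro sum.cong refl) (simp add: cinner_scaleC_left)
    also have "\<dots> = c b" using B(1) \<open>b \<in> B\<close> n(2) by simp
    finally show "c b = 0" using B(3) by simp
  qed
qed (use assms orthonormal_on_inj_on[OF e] in \<open>auto simp: card_image cspan_eq_span cvs.span_superset\<close>)

lemma span_insert_unit_slice:
  assumes V: "cvs.subspace V" and d: "d \<in> V" "cinner d d = 1"
    and B: "cvs.span B = {v \<in> V. cinner v d = 0}"
  shows "cvs.span (insert d B) = V"
proof (rule cvs.span_subspace[OF _ _ V])
  show "insert d B \<subseteq> V" using d B cvs.span_superset[of B] by auto
  show "V \<subseteq> cvs.span (insert d B)"
  proof
    fix v assume v: "v \<in> V"
    have "v - scaleC (cinner v d) d \<in> V" using V v d by (intro cvs.subspace_diff cvs.subspace_scale)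
    moreover have "cinner (v - scaleC (cinner v d) d) d = 0" using d by (simp add: cinner_simps)
    ultimately have "v - scaleC (cinner v d) d \<in> cvs.span B" using B by simp
    then show "v \<in> cvs.span (insert d B)" by (auto simp: cvs.span_breakdown_eq)
  qed
qed

lemma orthonormal_extend:
  assumes f: "orthonormal_on {..<n} f" and b: "b \<notin> cvs.span (f ` {..<n})"
  obtains u where "orthonormal_on {..<Suc n} (f(n := u))"
    and "cvs.span (f(n := u) ` {..<Suc n}) = cvs.span (insert b (f ` {..<n}))"
proof -
  let ?F = "f ` {..<n}"
  define p where "p = (\<Sum>i<n. scaleC (cinner b (f i)) (f i))"
  have p: "p \<in> cvs.span ?F" unfolding p_def by (intro cvs.span_sum cvs.span_scale cvs.span_base) auto
  define w where "w = b - p"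
  have "w \<noteq> 0" using b p by (auto simp: w_def)
  define u where "u = scaleC (complex_of_real (1 / norm w)) w"
  have "cinner w (f j) = 0" if "j < n" for j
    using cinner_orthonormal_sum[OF f order.refl] that by (simp add: w_def p_def cinner_diff_left)
  then have "cinner u (f j) = 0" if "j < n" for j
    using that by (simp add: u_def cinner_scaleC_left)
  moreover have "norm u = 1" using \<open>w \<noteq> 0\<close> by (simp add: u_def norm_scaleC norm_divide)
  then have "cinner u u = 1" by (simp add: cinner_self_norm)
  ultimately have "orthonormal_on {..<Suc n} (f(n := u))"
    using f unfolding orthonormal_on_def
    by (auto simp: less_Suc_eq cinner_eq_zero_sym[of u])
  moreover have "cvs.span (insert u ?F) = cvs.span (insert b ?F)"
    unfolding cvs.span_eq
  proof (intro conjI)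
    have "b \<in> cvs.span (insert b ?F)" "p \<in> cvs.span (insert b ?F)"
      using p cvs.span_mono[of ?F "insert b ?F"] by (auto intro: cvs.span_base)
    then have "scaleC (complex_of_real (1 / norm w)) (b - p) \<in> cvs.span (insert b ?F)"
      by (intro cvs.span_scale cvs.span_diff)
    then show "insert u ?F \<subseteq> cvs.span (insert b ?F)"
      using cvs.span_superset[of "insert b ?F"] by (auto simp: u_def w_def)
    have "u \<in> cvs.span (insert u ?F)" "p \<in> cvs.span (insert u ?F)"
      using p cvs.span_mono[of ?F "insert u ?F"] by (auto intro: cvs.span_base)
    then have "scaleC (complex_of_real (norm w)) u + p \<in> cvs.span (insert u ?F)"
      by (intro cvs.span_add cvs.span_scale)
    moreover have "scaleC (complex_of_real (norm w)) u + p = b"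
      using \<open>w \<noteq> 0\<close> by (simp add: u_def w_def scaleC_scaleC flip: of_real_mult)
    ultimately show "insert b ?F \<subseteq> cvs.span (insert u ?F)"
      using cvs.span_superset[of "insert u ?F"] by auto
  qed
  moreover have "f(n := u) ` {..<Suc n} = insert u ?F"
    by (auto simp: lessThan_Suc image_def)
  ultimately show ?thesis using that[of u] by simp
qed

lemma gram_schmidt:
  assumes "cvs.independent B" "finite B"
  shows "\<exists>f. orthonormal_on {..<card B} f \<and> cvs.span (f ` {..<card B}) = cvs.span B"
  using assms(2,1)
proof (induction B rule: finite_induct)
  case (insert b B)
  have "cvs.independent B" by (rule cvs.independent_mono[OF insert.prems]) auto
  then obtain f where f: "orthonormal_on {..<card B} f" "cvs.span (f ` {..<card B}) = cvs.span B"
    using insert.IH by blast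
  have "b \<notin> cvs.span (f ` {..<card B})"
    using insert f(2) by (simp add: cvs.independent_insert)
  then obtain u where u: "orthonormal_on {..<Suc (card B)} (f(card B := u))"
    "cvs.span (f(card B := u) ` {..<Suc (card B)}) = cvs.span (insert b (f ` {..<card B}))"
    by (rule orthonormal_extend[OF f(1)])
  have "cvs.span (insert b (f ` {..<card B})) = cvs.span (insert b B)"
    using f(2) by (simp add: cvs.span_insert)
  moreover have "card (insert b B) = Suc (card B)" using insert.hyps by simp
  ultimately show ?case using u by metis
qed (simp add: orthonormal_on_def)

lemma orthonormal_basis_nat_eqI:
  assumes e: "orthonormal_basis_nat e" and eq: "\<And>n. cinner x (e n) = cinner y (e n)"
  shows "x = y"
proof -
  have "x - y \<in> orthogonal_complement (range e)"
    using eq by (auto intro!: orthogonal_complementI simp: cinner_diff_left)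
  then have "x - y \<in> orthogonal_complement (closure (cspan (range e)))"
    by (simp add: orthogonal_complement_closure cspan_eq_span orthogonal_complement_span)
  then show ?thesis using e by (simp add: orthonormal_basis_nat_def orthogonal_complement_UNIV)
qed

section \<open>The model operator \<open>S\<^sub>k + F\<close>\<close>

locale shift_model =
  fixes T :: "'a::chilbert \<Rightarrow> 'a" and e :: "nat \<Rightarrow> 'a" and \<alpha> :: "nat \<Rightarrow> complex" and k :: nat
  assumes bounded: "bounded_op T" and k: "k \<ge> 1" and onb: "orthonormal_basis_nat e"
    and alpha: "(\<Sum>i\<le>k. (cmod (\<alpha> i))\<^sup>2) < 1"
    and T_e: "\<forall>n. T (e n) = e (n + k)
                 + (if n = 0 then (\<Sum>i<k. scaleC (\<alpha> i) (e i)) + scaleC (\<alpha> k - 1) (e k) else 0)"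
begin

abbreviation "s \<equiv> (\<Sum>i\<le>k. (cmod (\<alpha> i))\<^sup>2)"

lemma cinner_e: "cinner (e m) (e n) = (if m = n then 1 else 0)"
  using onb unfolding orthonormal_basis_nat_def by simp

lemma T_e_shift: "n \<ge> 1 \<Longrightarrow> T (e n) = e (n + k)"
  using T_e by auto

lemma T_e0: "T (e 0) = (\<Sum>i\<le>k. scaleC (\<alpha> i) (e i))"
  using T_e[rule_format, of 0]
  by (simp add: scaleC_diff_left lessThan_Suc_atMost[symmetric])

lemma orthonormal: "orthonormal_on UNIV e"
  by (rule orthonormal_basis_nat_orthonormal_on[OF onb])

lemma cinner_T_e0: "cinner (T (e 0)) (e n) = (if n \<le> k then \<alpha> n else 0)"
  unfolding T_e0 using cinner_orthonormal_sum[OF orthonormal, of "{..k}" n \<alpha>] by simp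

lemma cinner_T_e:
  "cinner (T (e m)) (e n) = (if m = 0 then (if n \<le> k then \<alpha> n else 0) else if n = m + k then 1 else 0)"
  by (cases "m = 0") (auto simp: cinner_T_e0 T_e_shift cinner_e)

lemma adj_e_low: "i \<le> k \<Longrightarrow> adj T (e i) = scaleC (cnj (\<alpha> i)) (e 0)"
  by (rule orthonormal_basis_nat_eqI[OF onb])
     (auto simp: cinner_adj_left[OF bounded] cinner_commute[of "e i"] cinner_T_e cinner_e cinner_scaleC_left)

lemma adj_e_shift: "n \<ge> 1 \<Longrightarrow> adj T (e (n + k)) = e n"
  by (rule orthonormal_basis_nat_eqI[OF onb])
     (auto simp: cinner_adj_left[OF bounded] cinner_commute[of "e (n + k)"] cinner_T_e cinner_e)

lemma adj_T_e0: "adj T (T (e 0)) = scaleC (of_real s) (e 0)"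
proof -
  have "adj T (T (e 0)) = (\<Sum>i\<le>k. scaleC (\<alpha> i * cnj (\<alpha> i)) (e 0))"
    using bounded_op_adj[OF bounded]
    by (simp add: T_e0 bounded_op_sum bounded_op_scaleC adj_e_low scaleC_scaleC)
  also have "\<dots> = scaleC (of_real s) (e 0)"
    by (simp only: of_real_sum_cmod_square scaleC_sum_left)
  finally show ?thesis .
qed

lemma adj_T_T: "adj T (T x) = x - scaleC (of_real (1 - s) * cinner x (e 0)) (e 0)"
proof (rule orthonormal_basis_nat_eqI[OF onb])
  fix n
  have "cinner (adj T (T x)) (e n) = (if n = 0 then of_real s * cinner x (e 0) else cinner x (e n))"
    by (simp add: cinner_adj_left[OF bounded] cinner_adj_right[OF bounded] adj_T_e0 adj_e_shift
        T_e_shift cinner_scaleC_right)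
  then show "cinner (adj T (T x)) (e n) = cinner (x - scaleC (of_real (1 - s) * cinner x (e 0)) (e 0)) (e n)"
    by (simp add: cinner_simps cinner_e algebra_simps)
qed

lemma T_adj_T:
  "T (adj T x) = x - (\<Sum>i\<le>k. scaleC (cinner x (e i)) (e i)) + scaleC (cinner x (T (e 0))) (T (e 0))"
proof (rule orthonormal_basis_nat_eqI[OF onb])
  fix n
  have proj: "cinner (\<Sum>i\<le>k. scaleC (cinner x (e i)) (e i)) (e n) = (if n \<le> k then cinner x (e n) else 0)"
    using cinner_orthonormal_sum[OF orthonormal, of "{..k}" n] by simp
  have "cinner (T (adj T x)) (e n) = (if n \<le> k then \<alpha> n * cinner x (T (e 0)) else cinner x (e n))"
  proof (cases "n \<le> k")
    case False
    then obtain m where "n = m + k" "m \<ge> 1" by (intro that[of "n - k"]) auto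
    then show ?thesis
      by (simp add: cinner_adj_right[OF bounded] adj_e_shift cinner_adj_left[OF bounded] T_e_shift)
  qed (simp add: cinner_adj_right[OF bounded] adj_e_low cinner_scaleC_right cinner_adj_left[OF bounded])
  then show "cinner (T (adj T x)) (e n) = cinner (x - (\<Sum>i\<le>k. scaleC (cinner x (e i)) (e i))
      + scaleC (cinner x (T (e 0))) (T (e 0))) (e n)"
    by (simp add: cinner_add_left cinner_diff_left cinner_scaleC_left proj cinner_T_e0)
qed

lemma norm_T_square: "(norm (T x))\<^sup>2 = (norm x)\<^sup>2 - (1 - s) * (cmod (cinner x (e 0)))\<^sup>2"
proof -
  have "(norm (T x))\<^sup>2 = Re (cinner x (adj T (T x)))"
    by (simp add: norm_sq_cinner cinner_adj_right[OF bounded])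
  also have "\<dots> = (norm x)\<^sup>2 - (1 - s) * Re (cnj (cinner x (e 0)) * cinner x (e 0))"
    by (simp add: adj_T_T cinner_simps norm_sq_cinner mult.assoc)
  also have "Re (cnj (cinner x (e 0)) * cinner x (e 0)) = (cmod (cinner x (e 0)))\<^sup>2"
    by (metis Re_complex_of_real complex_norm_square mult.commute)
  finally show ?thesis .
qed

lemma contraction: "contraction T"
  unfolding contraction_def
proof (intro conjI allI bounded)
  fix x
  have "(norm (T x))\<^sup>2 \<le> (norm x)\<^sup>2" using norm_T_square[of x] alpha by simp
  then show "norm (T x) \<le> norm x" by (rule power2_le_imp_le) simp
qed

lemma e_nonzero: "e n \<noteq> 0"
  using cinner_e[of n n] by auto

lemma adj_T_T_fixed_iff: "adj T (T x) = x \<longleftrightarrow> cinner x (e 0) = 0"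
proof -
  have "adj T (T x) = x \<longleftrightarrow> scaleC (of_real (1 - s) * cinner x (e 0)) (e 0) = 0"
    by (simp add: adj_T_T)
  also have "\<dots> \<longleftrightarrow> cinner x (e 0) = 0"
  proof -
    have "complex_of_real (1 - s) \<noteq> 0" using alpha by (simp only: of_real_eq_0_iff)
    then show ?thesis using e_nonzero[of 0] by (simp only: cvs.scale_eq_0_iff mult_eq_0_iff simp_thms)
  qed
  finally show ?thesis .
qed

lemma T_adj_T_fixed_iff: "T (adj T x) = x \<longleftrightarrow> (\<forall>i\<le>k. cinner x (e i) = 0)"
proof
  let ?a = "T (e 0)"
  assume "T (adj T x) = x"
  then have proj: "(\<Sum>i\<le>k. scaleC (cinner x (e i)) (e i)) = scaleC (cinner x ?a) ?a"
    by (simp add: T_adj_T algebra_simps)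
  have coord: "cinner x (e i) = cinner x ?a * \<alpha> i" if "i \<le> k" for i
    using arg_cong[OF proj, of "\<lambda>y. cinner y (e i)"] that
      cinner_orthonormal_sum[OF orthonormal, of "{..k}" i]
    by (simp add: cinner_scaleC_left cinner_T_e0)
  have "cinner x ?a = (\<Sum>i\<le>k. cnj (\<alpha> i) * cinner x (e i))"
    by (simp add: T_e0 cinner_sum_right cinner_scaleC_right)
  also have "\<dots> = (\<Sum>i\<le>k. (\<alpha> i * cnj (\<alpha> i)) * cinner x ?a)"
    by (intro sum.cong refl) (simp add: coord mult_ac)
  also have "\<dots> = of_real s * cinner x ?a"
    by (simp only: of_real_sum_cmod_square sum_distrib_right)
  finally have "cinner x ?a = 0" using alpha by (metis mult_cancel_right2 of_real_eq_1_iff order.irrefl)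
  then show "\<forall>i\<le>k. cinner x (e i) = 0" using coord by simp
next
  assume "\<forall>i\<le>k. cinner x (e i) = 0"
  then show "T (adj T x) = x"
    by (simp add: T_adj_T T_e0 cinner_sum_right cinner_scaleC_right)
qed

lemma defect_space_model: "defect_space T = cvs.span (e ` {0})"
proof -
  have "{x. adj T (T x) = x} = orthogonal_complement (e ` {0})"
    by (auto simp: adj_T_T_fixed_iff orthogonal_complement_def)
  then show ?thesis
    using orthogonal_complement_orthogonal_complement_orthonormal[of "{0}" e] orthonormal_on_subset[OF orthonormal]
    by (simp add: defect_space_eq[OF contraction])
qed

lemma defect_space_adj_model: "defect_space_adj T = cvs.span (e ` {..k})"
proof -
  have "{x. T (adj T x) = x} = orthogonal_complement (e ` {..k})"
    by (auto simp: T_adj_T_fixed_iff orthogonal_complement_def)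
  then show ?thesis
    using orthogonal_complement_orthogonal_complement_orthonormal[of "{..k}" e] orthonormal_on_subset[OF orthonormal]
    by (simp add: defect_space_adj_eq[OF contraction])
qed

text \<open>A reducing subspace on which \<open>T\<close> is unitary consists of fixed points of \<open>T T\<^sup>*\<close>, hence is
  orthogonal to \<open>e 0, \<dots>, e k\<close>, and being invariant under \<open>T\<^sup>*\<close>, which shifts \<open>e (n + k)\<close> to
  \<open>e n\<close>, it is orthogonal to all \<open>e n\<close>.\<close>

lemma completely_non_unitary: "completely_non_unitary T"
  unfolding completely_non_unitary_def
proof (intro conjI contraction notI, elim exE conjE)
  fix M assume red: "reducing_subspace T M" and "M \<noteq> {0}" and unitary: "unitary_on T M"
  have fixed: "T (adj T x) = x" if "x \<in> M" for x
  proof -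
    obtain y where "y \<in> M" "x = T y" using unitary \<open>x \<in> M\<close> unfolding unitary_on_def by blast
    then show ?thesis
      using contraction_norm_eq_imp_adj_fixed[OF contraction] unitary unfolding unitary_on_def by simp
  qed
  have "\<forall>x\<in>M. cinner x (e n) = 0" for n
  proof (induction n rule: less_induct)
    case (less n)
    show ?case
    proof (cases "n \<le> k")
      case True
      then show ?thesis using fixed T_adj_T_fixed_iff by blast
    next
      case False
      then obtain m where m: "n = m + k" "m \<ge> 1" "m < n" using k by (intro that[of "n - k"]) auto
      have "cinner x (e n) = cinner (adj T x) (e m)" for x
        using m by (simp add: cinner_adj_left[OF bounded] T_e_shift)
      then show ?thesis using less.IH[OF m(3)] red unfolding reducing_subspace_def by auto
    qed
  qed
  then have "M \<subseteq> {0}" using orthonormal_basis_nat_eqI[OF onb, of _ 0] by auto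
  moreover have "0 \<in> M" using red unfolding reducing_subspace_def csubspace_def by simp
  ultimately show False using \<open>M \<noteq> {0}\<close> by blast
qed

lemma defect_conditions:
  "contraction T \<and> completely_non_unitary T \<and> defect_space T \<subseteq> defect_space_adj T
    \<and> has_cdim (defect_space T) 1 \<and> has_cdim (defect_space_adj T) (k + 1)"
  using has_cdim_orthonormal_span[OF orthonormal_on_subset[OF orthonormal subset_UNIV], of "{0}"]
    has_cdim_orthonormal_span[OF orthonormal_on_subset[OF orthonormal subset_UNIV], of "{..k}"]
  by (simp add: contraction completely_non_unitary defect_space_model defect_space_adj_model cvs.span_mono)

end

section \<open>Completely non-unitary contractions with defect indices \<open>1\<close> and \<open>k + 1\<close>\<close>

text \<open>Closed form of the recursion \<open>e 0 = d\<close>, \<open>e (r + 1) = f r\<close> for \<open>r < k\<close>, and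
  \<open>e (n + k) = T (e n)\<close> for \<open>n \<ge> 1\<close>.\<close>

definition model_basis :: "('a \<Rightarrow> 'a) \<Rightarrow> nat \<Rightarrow> 'a \<Rightarrow> (nat \<Rightarrow> 'a) \<Rightarrow> nat \<Rightarrow> 'a" where
  "model_basis T k d f n = (if n = 0 then d else (T ^^ ((n - 1) div k)) (f ((n - 1) mod k)))"

lemma model_basis_0: "model_basis T k d f 0 = d"
  by (simp add: model_basis_def)

lemma model_basis_low: "1 \<le> n \<Longrightarrow> n \<le> k \<Longrightarrow> model_basis T k d f n = f (n - 1)"
  by (simp add: model_basis_def)

lemma model_basis_shift: "1 \<le> k \<Longrightarrow> 1 \<le> n \<Longrightarrow> model_basis T k d f (n + k) = T (model_basis T k d f n)"
proof -
  assume "1 \<le> k" "1 \<le> n"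
  then have shift: "n + k - 1 = (n - 1) + k" by simp
  have "(n + k - 1) div k = Suc ((n - 1) div k)" "(n + k - 1) mod k = (n - 1) mod k"
    unfolding shift using \<open>1 \<le> k\<close> by simp_all
  then show ?thesis using \<open>1 \<le> n\<close> by (simp add: model_basis_def)
qed

locale cnu_defect_indices =
  fixes T :: "'a::chilbert \<Rightarrow> 'a" and k :: nat
  assumes k: "k \<ge> 1" and cnu: "completely_non_unitary T"
    and defect_subset: "defect_space T \<subseteq> defect_space_adj T"
    and dim_defect: "has_cdim (defect_space T) 1"
    and dim_defect_adj: "has_cdim (defect_space_adj T) (k + 1)"
begin

lemma contraction: "contraction T"
  using cnu unfolding completely_non_unitary_def by simp

lemma bounded: "bounded_op T"
  using contraction by (rule contraction_bounded_op)

lemma fixed_adj_T_T_closed_subspace: "csubspace {x. adj T (T x) = x}" "closed {x. adj T (T x) = x}"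
  by (intro fixed_points_closed_subspace bounded_op_comp[OF bounded_op_adj] bounded)+

lemma fixed_T_adj_T_closed_subspace: "csubspace {x. T (adj T x) = x}" "closed {x. T (adj T x) = x}"
  by (intro fixed_points_closed_subspace bounded_op_comp[OF bounded bounded_op_adj] bounded)+

lemma orthogonal_complement_defect_space_adj:
  "orthogonal_complement (defect_space_adj T) = {x. T (adj T x) = x}"
  unfolding defect_space_adj_eq[OF contraction]
  by (rule orthogonal_complement_orthogonal_complement[OF fixed_T_adj_T_closed_subspace])

lemma defect_unit_vector:
  obtains d where "norm d = 1" "d \<in> defect_space_adj T" "\<And>x. adj T (T x) = x \<longleftrightarrow> cinner x d = 0"
proof -
  obtain b where b: "cindependent {b}" "cspan {b} = defect_space T"
    using dim_defect unfolding has_cdim_def by (metis card_1_singletonE)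
  then have "b \<noteq> 0" by (auto simp: cindependent_iff_independent cvs.dependent_zero)
  define d where "d = scaleC (complex_of_real (1 / norm b)) b"
  have "norm d = 1" using \<open>b \<noteq> 0\<close> by (simp add: d_def norm_scaleC norm_divide)
  moreover have "d \<in> defect_space T"
    unfolding d_def b(2)[symmetric] cspan_eq_span by (intro cvs.span_scale cvs.span_base) simp
  moreover have "adj T (T x) = x \<longleftrightarrow> cinner x b = 0" for x
  proof -
    have "{x. adj T (T x) = x} = orthogonal_complement (defect_space T)"
      unfolding defect_space_eq[OF contraction]
      by (rule orthogonal_complement_orthogonal_complement[OF fixed_adj_T_T_closed_subspace, symmetric])
    also have "\<dots> = orthogonal_complement {b}"
      unfolding b(2)[symmetric] cspan_eq_span by (rule orthogonal_complement_span)
    finally show ?thesis by (auto simp: orthogonal_complement_def set_eq_iff)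
  qed
  moreover have "cinner x d = 0 \<longleftrightarrow> cinner x b = 0" for x
    using \<open>b \<noteq> 0\<close> by (simp add: d_def cinner_scaleC_right)
  ultimately show ?thesis using that defect_subset by auto
qed

lemma subspace_defect_space_adj: "cvs.subspace (defect_space_adj T)"
  by (simp add: defect_space_adj_eq[OF contraction] csubspace_orthogonal_complement flip: csubspace_iff_subspace)

lemma dim_defect_space_adj: "cvs.dim (defect_space_adj T) = k + 1"
proof -
  obtain B where "card B = k + 1" "cindependent B" "cspan B = defect_space_adj T"
    using dim_defect_adj unfolding has_cdim_def by blast
  then show ?thesis
    by (metis cindependent_iff_independent cspan_eq_span cvs.dim_span_eq_card_independent)
qed

lemma finite_dim_defect_space_adj: "\<exists>B. finite B \<and> defect_space_adj T = cvs.span B"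
  using dim_defect_adj unfolding has_cdim_def cspan_eq_span by metis

end

locale cnu_defect_indices_basis = cnu_defect_indices +
  fixes d :: "'a::chilbert" and f :: "nat \<Rightarrow> 'a"
  assumes d_norm: "norm d = 1" and d_defect: "d \<in> defect_space_adj T"
    and fixed_iff_perp_d: "\<And>x. adj T (T x) = x \<longleftrightarrow> cinner x d = 0"
    and f: "orthonormal_on {..<k} f"
    and span_f: "cvs.span (f ` {..<k}) = {v \<in> defect_space_adj T. cinner v d = 0}"
begin

abbreviation "g \<equiv> model_basis T k d f"

lemma cinner_d_d: "cinner d d = 1"
  using d_norm by (simp add: cinner_self_norm)

lemma f_defect: "j < k \<Longrightarrow> f j \<in> defect_space_adj T" and f_perp_d: "j < k \<Longrightarrow> cinner (f j) d = 0"
  using span_f cvs.span_superset[of "f ` {..<k}"] by auto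

lemma fixed_T_adj_T_imp_fixed_adj_T_T: "T (adj T x) = x \<Longrightarrow> adj T (T x) = x"
  using d_defect orthogonal_complement_defect_space_adj fixed_iff_perp_d
  by (auto dest: orthogonal_complementD)

lemma cinner_T_T: "adj T (T y) = y \<Longrightarrow> cinner (T x) (T y) = cinner x y"
  by (metis cinner_adj_right bounded)

lemma model_basis_fixed:
  shows "1 \<le> n \<Longrightarrow> adj T (T (g n)) = g n" and "k < n \<Longrightarrow> T (adj T (g n)) = g n"
proof -
  have "(1 \<le> n \<longrightarrow> adj T (T (g n)) = g n) \<and> (k < n \<longrightarrow> T (adj T (g n)) = g n)" for n
  proof (induction n rule: less_induct)
    case (less n)
    show ?case
    proof (cases "n \<le> k")
      case True
      then show ?thesis using f_perp_d fixed_iff_perp_d by (auto simp: model_basis_low)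
    next
      case False
      then obtain m where m: "n = m + k" "1 \<le> m" "m < n" using k by (intro that[of "n - k"]) auto
      then have "T (adj T (g n)) = g n"
        using less.IH[OF m(3)] k by (simp add: model_basis_shift)
      then show ?thesis using fixed_T_adj_T_imp_fixed_adj_T_T by blast
    qed
  qed
  then show "1 \<le> n \<Longrightarrow> adj T (T (g n)) = g n" "k < n \<Longrightarrow> T (adj T (g n)) = g n" by blast+
qed

lemma model_basis_defect: "n \<le> k \<Longrightarrow> g n \<in> defect_space_adj T"
  using d_defect f_defect by (cases "n = 0") (auto simp: model_basis_0 model_basis_low)

lemma model_basis_perp_defect: "k < n \<Longrightarrow> g n \<in> orthogonal_complement (defect_space_adj T)"
  using model_basis_fixed(2) orthogonal_complement_defect_space_adj by simp

lemma span_model_basis: "cvs.span (g ` {..k}) = defect_space_adj T"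
proof -
  have "{..k} = insert 0 (Suc ` {..<k})"
    unfolding lessThan_Suc_atMost[symmetric] by (rule lessThan_Suc_eq_insert_0)
  then have "g ` {..k} = insert d (f ` {..<k})"
    by (auto simp: model_basis_0 model_basis_low image_image)
  then show ?thesis
    using span_insert_unit_slice[OF subspace_defect_space_adj d_defect cinner_d_d span_f] by simp
qed

lemma orthonormal_model_basis: "cinner (g m) (g n) = (if m = n then 1 else 0)"
proof (induction m arbitrary: n rule: less_induct)
  case (less m)
  consider "m \<le> k" "n \<le> k" | "m \<le> k" "k < n" | "k < m" "n \<le> k" | "k < m" "k < n" by linarith
  then show ?case
  proof cases
    case 1
    then show ?thesis
      using f cinner_d_d f_perp_d[of "m - 1"] f_perp_d[of "n - 1"]
      by (cases "m = 0"; cases "n = 0")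
         (auto simp: model_basis_0 model_basis_low orthonormal_onD cinner_eq_zero_sym[of d])
  next
    case 2
    then have "g m \<in> defect_space_adj T" "g n \<in> orthogonal_complement (defect_space_adj T)"
      by (simp_all add: model_basis_defect model_basis_perp_defect)
    then have "cinner (g m) (g n) = 0" by (intro orthogonal_complementD')
    then show ?thesis using 2 by simp
  next
    case 3
    then have "g m \<in> orthogonal_complement (defect_space_adj T)" "g n \<in> defect_space_adj T"
      by (simp_all add: model_basis_defect model_basis_perp_defect)
    then have "cinner (g m) (g n) = 0" by (intro orthogonal_complementD)
    then show ?thesis using 3 by simp
  next
    case 4
    then have m: "m - k + k = m" "1 \<le> m - k" "m - k < m" and n: "n - k + k = n" "1 \<le> n - k"
      using k by auto
    have "g m = T (g (m - k))" "g n = T (g (n - k))"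
      using model_basis_shift[OF k m(2)] model_basis_shift[OF k n(2)] by (simp_all only: m(1) n(1))
    then have "cinner (g m) (g n) = cinner (g (m - k)) (g (n - k))"
      using cinner_T_T model_basis_fixed(1)[OF n(2)] by simp
    also have "\<dots> = (if m - k = n - k then 1 else 0)" by (rule less.IH[OF m(3)])
    finally show ?thesis using 4 by auto
  qed
qed

lemma T_d_defect: "T d \<in> defect_space_adj T"
  unfolding defect_space_adj_eq[OF contraction]
proof (rule orthogonal_complementI)
  fix w assume "w \<in> {x. T (adj T x) = x}"
  then have "adj T (T (adj T w)) = adj T w" by simp
  then have "cinner (adj T w) d = 0" using fixed_iff_perp_d by blast
  then show "cinner (T d) w = 0" by (simp add: cinner_adj_right[OF bounded] cinner_eq_zero_sym[of d])
qed

lemma model_basis_perp_fixed: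
  assumes "x \<in> orthogonal_complement (range g)" shows "T (adj T x) = x"
proof -
  have "x \<in> orthogonal_complement (g ` {..k})"
    using assms orthogonal_complement_antimono[of "g ` {..k}" "range g"] by auto
  then have "x \<in> orthogonal_complement (cvs.span (g ` {..k}))" by (simp only: orthogonal_complement_span)
  then show ?thesis by (simp add: span_model_basis orthogonal_complement_defect_space_adj)
qed

lemma T_model_basis_perp:
  assumes x: "x \<in> orthogonal_complement (range g)" shows "T x \<in> orthogonal_complement (range g)"
proof (rule orthogonal_complementI, elim rangeE)
  fix n y assume y: "y = g n"
  show "cinner (T x) y = 0"
  proof (cases "n \<le> k")
    case True
    have "T x \<in> orthogonal_complement (defect_space_adj T)"
      using model_basis_perp_fixed[OF x] fixed_T_adj_T_imp_fixed_adj_T_T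
      by (simp add: orthogonal_complement_defect_space_adj)
    then show ?thesis using y model_basis_defect[OF True] by (auto dest: orthogonal_complementD)
  next
    case False
    then obtain m where "n = m + k" "1 \<le> m" using k by (intro that[of "n - k"]) auto
    then have "cinner (T x) y = cinner x (g m)"
      using y k model_basis_fixed(1) by (simp add: model_basis_shift cinner_T_T)
    then show ?thesis using x by (simp add: orthogonal_complementD)
  qed
qed

lemma adj_T_model_basis_perp:
  assumes x: "x \<in> orthogonal_complement (range g)" shows "adj T x \<in> orthogonal_complement (range g)"
proof (rule orthogonal_complementI, elim rangeE)
  fix n y assume y: "y = g n"
  have "cinner (adj T x) y = cinner x (T (g n))" by (simp add: y cinner_adj_left[OF bounded])
  also have "\<dots> = 0"
  proof (cases "n = 0")
    case True
    have "x \<in> orthogonal_complement (defect_space_adj T)"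
      using model_basis_perp_fixed[OF x] by (simp add: orthogonal_complement_defect_space_adj)
    then show ?thesis using True T_d_defect by (auto simp: model_basis_0 dest: orthogonal_complementD)
  next
    case False
    then show ?thesis using x k by (simp add: model_basis_shift[symmetric] orthogonal_complementD)
  qed
  finally show "cinner (adj T x) y = 0" .
qed

lemma orthogonal_complement_model_basis: "orthogonal_complement (range g) = {0}"
  using model_basis_perp_fixed fixed_T_adj_T_imp_fixed_adj_T_T T_model_basis_perp adj_T_model_basis_perp
  by (intro completely_non_unitary_trivial_subspace[OF cnu csubspace_orthogonal_complement
        closed_orthogonal_complement]) auto

lemma orthonormal_basis_model_basis: "orthonormal_basis_nat g"
  unfolding orthonormal_basis_nat_def
proof (intro conjI allI orthonormal_model_basis)
  let ?C = "closure (cspan (range g))"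
  have "csubspace ?C" by (rule csubspace_closure) (simp add: csubspace_iff_subspace cspan_eq_span)
  then have "?C = orthogonal_complement (orthogonal_complement ?C)"
    by (simp add: orthogonal_complement_orthogonal_complement)
  also have "orthogonal_complement ?C = {0}"
    by (simp add: orthogonal_complement_closure cspan_eq_span orthogonal_complement_span
        orthogonal_complement_model_basis)
  finally show "?C = UNIV" by (auto simp: orthogonal_complement_def)
qed

lemma T_d_expansion: "T d = (\<Sum>i\<le>k. scaleC (cinner (T d) (g i)) (g i))"
  using orthonormal_span_expansion[of "{..k}" g] T_d_defect orthonormal_model_basis
  by (simp add: span_model_basis orthonormal_on_def)

lemma T_d_coefficients: "(\<Sum>i\<le>k. (cmod (cinner (T d) (g i)))\<^sup>2) < 1"
proof -
  have "norm (T d) \<noteq> 1"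
    using contraction_norm_eq_imp_adj_fixed[OF contraction, of d] d_norm fixed_iff_perp_d[of d] cinner_d_d by auto
  then have "norm (T d) < 1" using contraction_norm_le[OF contraction, of d] d_norm by simp
  then have "(norm (T d))\<^sup>2 < 1" by (simp add: abs_square_less_1)
  moreover have "(norm (T d))\<^sup>2 = (\<Sum>i\<le>k. (cmod (cinner (T d) (g i)))\<^sup>2)"
    by (subst T_d_expansion) (simp add: norm_orthonormal_sum_square orthonormal_on_def orthonormal_model_basis)
  ultimately show ?thesis by simp
qed

lemma model_basis_representation:
  "\<exists>e \<alpha>. orthonormal_basis_nat e \<and> (\<Sum>i\<le>k. (cmod (\<alpha> i))\<^sup>2) < 1
     \<and> (\<forall>n. T (e n) = e (n + k)
          + (if n = 0 then (\<Sum>i<k. scaleC (\<alpha> i) (e i)) + scaleC (\<alpha> k - 1) (e k) else 0))"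
proof (intro exI conjI allI)
  fix n
  show "T (g n) = g (n + k) + (if n = 0 then (\<Sum>i<k. scaleC (cinner (T d) (g i)) (g i))
      + scaleC (cinner (T d) (g k) - 1) (g k) else 0)"
  proof (cases "n = 0")
    case True
    let ?c = "\<lambda>i. cinner (T d) (g i)"
    have "g (0 + k) + ((\<Sum>i<k. scaleC (?c i) (g i)) + scaleC (?c k - 1) (g k))
        = (\<Sum>i<k. scaleC (?c i) (g i)) + scaleC (?c k) (g k)"
      by (simp add: scaleC_diff_left)
    also have "\<dots> = (\<Sum>i\<le>k. scaleC (?c i) (g i))" by (simp add: lessThan_Suc_atMost[symmetric])
    also have "\<dots> = T (g 0)" unfolding model_basis_0 by (rule T_d_expansion[symmetric])
    finally show ?thesis using True by simp
  qed (use k in \<open>simp add: model_basis_shift\<close>)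
qed (fact orthonormal_basis_model_basis T_d_coefficients)+

end

lemma (in cnu_defect_indices) model_representation:
  "\<exists>e \<alpha>. orthonormal_basis_nat e \<and> (\<Sum>i\<le>k. (cmod (\<alpha> i))\<^sup>2) < 1
     \<and> (\<forall>n. T (e n) = e (n + k)
          + (if n = 0 then (\<Sum>i<k. scaleC (\<alpha> i) (e i)) + scaleC (\<alpha> k - 1) (e k) else 0))"
proof -
  obtain d where d: "norm d = 1" "d \<in> defect_space_adj T" "\<And>x. adj T (T x) = x \<longleftrightarrow> cinner x d = 0"
    using defect_unit_vector by blast
  have dd: "cinner d d = 1" using d(1) by (simp add: cinner_self_norm)
  let ?U = "{v \<in> defect_space_adj T. cinner v d = 0}"
  have "cvs.subspace {v. cinner v d = 0}"
    by (auto simp: cvs.subspace_def cinner_add_left cinner_scaleC_left)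
  then have "cvs.subspace (defect_space_adj T \<inter> {v. cinner v d = 0})"
    by (rule cvs.subspace_inter[OF subspace_defect_space_adj])
  moreover have "defect_space_adj T \<inter> {v. cinner v d = 0} = ?U" by blast
  ultimately have U: "cvs.subspace ?U" by simp
  obtain B where B: "B \<subseteq> ?U" "cvs.independent B" "?U \<subseteq> cvs.span B" "card B = cvs.dim ?U"
    by (rule cvs.basis_exists)
  have span_B: "cvs.span B = ?U" using B(1,3) U by (rule cvs.span_subspace)
  have span_dB: "cvs.span (insert d B) = defect_space_adj T"
    by (rule span_insert_unit_slice[OF subspace_defect_space_adj d(2) dd span_B])
  have "d \<notin> cvs.span B" using span_B dd by simp
  then have indep: "cvs.independent (insert d B)" using B(2) by (rule cvs.independent_insertI)
  obtain S where S: "finite S" "defect_space_adj T = cvs.span S" using finite_dim_defect_space_adj by blast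
  have "insert d B \<subseteq> cvs.span S"
    using cvs.span_superset[of "insert d B"] unfolding span_dB S(2) .
  then have "finite (insert d B)" by (rule conjunct1[OF cvs.independent_span_bound[OF S(1) indep]])
  moreover have "card (insert d B) = k + 1"
    using dim_defect_space_adj span_dB cvs.dim_span_eq_card_independent[OF indep] by simp
  moreover have "d \<notin> B" using \<open>d \<notin> cvs.span B\<close> cvs.span_superset[of B] by blast
  ultimately have "finite B" "card B = k" by simp_all
  then obtain f where "orthonormal_on {..<k} f" "cvs.span (f ` {..<k}) = ?U"
    using gram_schmidt[OF B(2)] span_B by metis
  then interpret cnu_defect_indices_basis T k d f
    using d by unfold_locales
  show ?thesis by (rule model_basis_representation)
qed

theorem theorem3p6:
  fixes T :: "'h::chilbert \<Rightarrow> 'h" and k :: nat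
  assumes "separable_hilbert TYPE('h)"
    and "infinite_dimensional TYPE('h)"
    and "bounded_op T"
    and "k \<ge> 1"
  shows "(contraction T \<and> completely_non_unitary T
          \<and> defect_space T \<subseteq> defect_space_adj T
          \<and> has_cdim (defect_space T) 1 \<and> has_cdim (defect_space_adj T) (k + 1))
     \<longleftrightarrow>
     (\<exists>e \<alpha>. orthonormal_basis_nat e
        \<and> (\<Sum>i\<le>k. (cmod (\<alpha> i))\<^sup>2) < 1
        \<and> (\<forall>n. T (e n) = e (n + k)
                 + (if n = 0 then (\<Sum>i<k. scaleC (\<alpha> i) (e i)) + scaleC (\<alpha> k - 1) (e k) else 0)))"
proof
  assume "contraction T \<and> completely_non_unitary T \<and> defect_space T \<subseteq> defect_space_adj T
    \<and> has_cdim (defect_space T) 1 \<and> has_cdim (defect_space_adj T) (k + 1)"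
  then show "\<exists>e \<alpha>. orthonormal_basis_nat e \<and> (\<Sum>i\<le>k. (cmod (\<alpha> i))\<^sup>2) < 1
      \<and> (\<forall>n. T (e n) = e (n + k)
        + (if n = 0 then (\<Sum>i<k. scaleC (\<alpha> i) (e i)) + scaleC (\<alpha> k - 1) (e k) else 0))"
    using assms(4) by (intro cnu_defect_indices.model_representation cnu_defect_indices.intro) auto
next
  assume "\<exists>e \<alpha>. orthonormal_basis_nat e \<and> (\<Sum>i\<le>k. (cmod (\<alpha> i))\<^sup>2) < 1
      \<and> (\<forall>n. T (e n) = e (n + k)
        + (if n = 0 then (\<Sum>i<k. scaleC (\<alpha> i) (e i)) + scaleC (\<alpha> k - 1) (e k) else 0))"
  then obtain e \<alpha> where "orthonormal_basis_nat e" "(\<Sum>i\<le>k. (cmod (\<alpha> i))\<^sup>2) < 1"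
    "\<forall>n. T (e n) = e (n + k)
      + (if n = 0 then (\<Sum>i<k. scaleC (\<alpha> i) (e i)) + scaleC (\<alpha> k - 1) (e k) else 0)"
    by blast
  then have "shift_model T e \<alpha> k" using assms(3,4) by (simp add: shift_model_def)
  then show "contraction T \<and> completely_non_unitary T \<and> defect_space T \<subseteq> defect_space_adj T
      \<and> has_cdim (defect_space T) 1 \<and> has_cdim (defect_space_adj T) (k + 1)"
    by (rule shift_model.defect_conditions)
qed

end
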